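(* Let $k$ be a field, $A$ a finitely generated commutative $k$-algebra, $k_n=k[t]/(t^{n+1})$, and $B$ a $k_n$-algebra with an isomorphism $gr\,B\simeq A\otimes_kk_n$ such that $B$ induces a deformation of $D(A)$. Suppose there is a $k$-algebra homomorphism $s:D(A)\to D(B)$ with $\tau\circ s=\mathrm{id}$, where $\tau:D(B)\to D(A)$ is the residue map, and regard $B$ as a left $A\otimes_kk_n$-module via $a\cdot b=s(a)(b)$. Then $D({}_BB)=D({}_{A\otimes_kk_n}B)$ as subrings of $\operatorname{End}_{k_n}(B)$.
   Context: All differential operators are $k[t]$-linear. For a $k_n$-algebra $C$ and a left $C$-module $M$, $D({}_CM)=\bigcup_mD^m({}_CM)$ where $D^m({}_CM)=\{d\in\operatorname{End}_{k_n}(M): [f_m,\dots,[f_0,d]\dots]=0\ \forall f_0,\dots,f_m\in C\}$, with $f$ acting through the module structure and $[f,d]=fd-df$. $D({}_BB)$ uses the left multiplication of $B$ on itself; $D(B)=D({}_BB)$; $D(A)$ is the ring of $k$-linear differential operators on $A$, containing $A$. $gr$ is taken for the $t$-adic filtration. The map $\gamma:gr\,D(B)\to\operatorname{End}_{k_n}(gr\,B)$ sends the class of $d\in t^iD(B)$ to the endomorphism $t^jB/t^{j+1}B\to t^{i+j}B/t^{i+j+1}B$ induced by $d$; it lands in $D(gr\,B)$. $B$ induces a deformation of $D(A)$ if $\gamma:gr\,D(B)\to D(gr\,B)$ is an isomorphism; then $D(B)/tD(B)\simeq D(A)$, and $\tau$ is the induced residue map. *)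

theory Defs
  imports Main "HOL-Library.Function_Algebras"
begin

definition comm_op :: "('c \<Rightarrow> 'm \<Rightarrow> 'm) \<Rightarrow> 'c \<Rightarrow> ('m \<Rightarrow> 'm) \<Rightarrow> ('m \<Rightarrow> 'm::ab_group_add)" where
  "comm_op act f d = (\<lambda>x. act f (d x) - d (act f x))"

definition klin_end :: "'m set \<Rightarrow> ('k \<Rightarrow> 'm \<Rightarrow> 'm) \<Rightarrow> ('m::ab_group_add \<Rightarrow> 'm) set" where
  "klin_end M sc = {d. (\<forall>x\<in>M. d x \<in> M) \<and> (\<forall>x\<in>M. \<forall>y\<in>M. d (x + y) = d x + d y)
                        \<and> (\<forall>c. \<forall>x\<in>M. d (sc c x) = sc c (d x))}"

text \<open>k_n-linear endomorphisms: k-linear and commuting with the action tm of t.\<close>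
definition kn_end :: "'m set \<Rightarrow> ('k \<Rightarrow> 'm \<Rightarrow> 'm) \<Rightarrow> ('m \<Rightarrow> 'm) \<Rightarrow> ('m::ab_group_add \<Rightarrow> 'm) set" where
  "kn_end M sc tm = {d \<in> klin_end M sc. \<forall>x\<in>M. d (tm x) = tm (d x)}"

text \<open>D^m(_C M): fs = [f_0,...,f_m], fold computes [f_m,...,[f_0,d]...].\<close>
definition diffop_ord :: "'m set \<Rightarrow> ('m \<Rightarrow> 'm) set \<Rightarrow> ('c \<Rightarrow> 'm \<Rightarrow> 'm) \<Rightarrow> 'c set \<Rightarrow> nat
                          \<Rightarrow> ('m::ab_group_add \<Rightarrow> 'm) set" where
  "diffop_ord M E act C m = {d \<in> E. \<forall>fs. length fs = Suc m \<longrightarrow> set fs \<subseteq> C \<longrightarrow>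
                                 (\<forall>x\<in>M. fold (comm_op act) fs d x = 0)}"

definition diffops :: "'m set \<Rightarrow> ('m \<Rightarrow> 'm) set \<Rightarrow> ('c \<Rightarrow> 'm \<Rightarrow> 'm) \<Rightarrow> 'c set
                          \<Rightarrow> ('m::ab_group_add \<Rightarrow> 'm) set" where
  "diffops M E act C = (\<Union>m. diffop_ord M E act C m)"

definition ring_hom_fun :: "('x::ring_1 \<Rightarrow> 'y::ring_1) \<Rightarrow> bool" where
  "ring_hom_fun f \<longleftrightarrow> (\<forall>x y. f (x + y) = f x + f y) \<and> (\<forall>x y. f (x * y) = f x * f y) \<and> f 1 = 1"

inductive_set alg_gen :: "('k \<Rightarrow> 'a::comm_ring_1) \<Rightarrow> 'a set \<Rightarrow> 'a set" for iA S where
  gen: "x \<in> S \<Longrightarrow> x \<in> alg_gen iA S"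
| scal: "iA c \<in> alg_gen iA S"
| add: "x \<in> alg_gen iA S \<Longrightarrow> y \<in> alg_gen iA S \<Longrightarrow> x + y \<in> alg_gen iA S"
| mult: "x \<in> alg_gen iA S \<Longrightarrow> y \<in> alg_gen iA S \<Longrightarrow> x * y \<in> alg_gen iA S"

definition fin_gen_alg :: "('k \<Rightarrow> 'a::comm_ring_1) \<Rightarrow> bool" where
  "fin_gen_alg iA \<longleftrightarrow> (\<exists>S. finite S \<and> alg_gen iA S = UNIV)"

definition D_A :: "('k \<Rightarrow> 'a::comm_ring_1) \<Rightarrow> ('a \<Rightarrow> 'a) set" where
  "D_A iA = diffops UNIV (klin_end UNIV (\<lambda>c x. iA c * x)) (\<lambda>f x. f * x) UNIV"

definition End_B :: "('k \<Rightarrow> 'b::ring_1) \<Rightarrow> 'b \<Rightarrow> ('b \<Rightarrow> 'b) set" where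
  "End_B iB t = kn_end UNIV (\<lambda>c x. iB c * x) (\<lambda>x. t * x)"

definition D_B :: "('k \<Rightarrow> 'b::ring_1) \<Rightarrow> 'b \<Rightarrow> ('b \<Rightarrow> 'b) set" where
  "D_B iB t = diffops UNIV (End_B iB t) (\<lambda>f x. f * x) UNIV"

definition tpow_set :: "'b::ring_1 \<Rightarrow> nat \<Rightarrow> 'b set" where
  "tpow_set t j = {t ^ j * b | b. True}"

definition tD :: "('k \<Rightarrow> 'b::ring_1) \<Rightarrow> 'b \<Rightarrow> nat \<Rightarrow> ('b \<Rightarrow> 'b) set" where
  "tD iB t i = {(\<lambda>x. t ^ i * d x) | d. d \<in> D_B iB t}"

section \<open>A \<otimes>_k k_n = A[t]/(t^(n+1)), as coefficient functions supported in {0..n}\<close>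

definition tens :: "nat \<Rightarrow> (nat \<Rightarrow> 'a::comm_ring_1) set" where
  "tens n = {p. \<forall>j>n. p j = 0}"

definition tens_mult :: "nat \<Rightarrow> (nat \<Rightarrow> 'a::comm_ring_1) \<Rightarrow> (nat \<Rightarrow> 'a) \<Rightarrow> (nat \<Rightarrow> 'a)" where
  "tens_mult n p q = (\<lambda>j. if j \<le> n then (\<Sum>i\<le>j. p i * q (j - i)) else 0)"

definition tens_shift :: "nat \<Rightarrow> (nat \<Rightarrow> 'a::comm_ring_1) \<Rightarrow> (nat \<Rightarrow> 'a)" where
  "tens_shift n p = (\<lambda>j. if j = 0 \<or> n < j then 0 else p (j - 1))"

text \<open>D(A \<otimes> k_n), k_n-linear (this is D(gr B) transported along gr B \<simeq> A \<otimes> k_n).\<close>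
definition D_tens :: "('k \<Rightarrow> 'a::comm_ring_1) \<Rightarrow> nat \<Rightarrow> ((nat \<Rightarrow> 'a) \<Rightarrow> (nat \<Rightarrow> 'a)) set" where
  "D_tens iA n = diffops (tens n) (kn_end (tens n) (\<lambda>c p j. iA c * p j) (tens_shift n))
                   (tens_mult n) (tens n)"

text \<open>phi j : t^j B \<rightarrow> A is the degree-j component (vanishing on t^(j+1) B) of a graded
  k_n-algebra isomorphism gr B \<rightarrow> A \<otimes> k_n, class of b in t^jB/t^(j+1)B \<mapsto> phi j b \<cdot> t^j.\<close>
definition gr_iso :: "('k \<Rightarrow> 'a::comm_ring_1) \<Rightarrow> ('k \<Rightarrow> 'b::ring_1) \<Rightarrow> 'b \<Rightarrow> nat
                        \<Rightarrow> (nat \<Rightarrow> 'b \<Rightarrow> 'a) \<Rightarrow> bool" where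
  "gr_iso iA iB t n phi \<longleftrightarrow>
     (\<forall>j\<le>n. (\<forall>x\<in>tpow_set t j. \<forall>y\<in>tpow_set t j. phi j (x + y) = phi j x + phi j y)
           \<and> (\<forall>c. \<forall>x\<in>tpow_set t j. phi j (iB c * x) = iA c * phi j x)
           \<and> phi j ` tpow_set t j = UNIV
           \<and> {x \<in> tpow_set t j. phi j x = 0} = tpow_set t (Suc j))
   \<and> (\<forall>i j. i + j \<le> n \<longrightarrow> (\<forall>x\<in>tpow_set t i. \<forall>y\<in>tpow_set t j.
                               phi (i + j) (x * y) = phi i x * phi j y))
   \<and> phi 0 1 = 1
   \<and> (\<forall>j<n. \<forall>x\<in>tpow_set t j. phi (Suc j) (t * x) = phi j x)"

text \<open>gamma on the degree-i piece t^i D(B)/t^(i+1) D(B), transported to A \<otimes> k_n: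
  sends a t^j to phi (i+j) (d b) t^(i+j), where b \<in> t^j B with phi j b = a.\<close>
definition gamma_phi :: "'b::ring_1 \<Rightarrow> (nat \<Rightarrow> 'b \<Rightarrow> 'a::comm_ring_1) \<Rightarrow> nat \<Rightarrow> nat
                          \<Rightarrow> ('b \<Rightarrow> 'b) \<Rightarrow> (nat \<Rightarrow> 'a) \<Rightarrow> (nat \<Rightarrow> 'a)" where
  "gamma_phi t phi n i d = (\<lambda>p m. if i \<le> m \<and> m \<le> n
       then phi m (d (SOME b. b \<in> tpow_set t (m - i) \<and> phi (m - i) b = p (m - i))) else 0)"

text \<open>B induces a deformation of D(A): gamma : gr D(B) = \<Oplus>_{i\<le>n} t^iD(B)/t^(i+1)D(B) \<rightarrow> D(gr B)
  is injective and surjective.\<close>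
definition induces_deformation :: "('k \<Rightarrow> 'a::comm_ring_1) \<Rightarrow> ('k \<Rightarrow> 'b::ring_1) \<Rightarrow> 'b \<Rightarrow> nat
                        \<Rightarrow> (nat \<Rightarrow> 'b \<Rightarrow> 'a) \<Rightarrow> bool" where
  "induces_deformation iA iB t n phi \<longleftrightarrow>
     (\<forall>ds. (\<forall>i\<le>n. ds i \<in> tD iB t i)
           \<and> (\<forall>p\<in>tens n. \<forall>m. (\<Sum>i\<le>n. gamma_phi t phi n i (ds i) p m) = 0)
           \<longrightarrow> (\<forall>i\<le>n. ds i \<in> tD iB t (Suc i)))
   \<and> (\<forall>E\<in>D_tens iA n. \<exists>ds. (\<forall>i\<le>n. ds i \<in> tD iB t i)
           \<and> (\<forall>p\<in>tens n. \<forall>m. E p m = (\<Sum>i\<le>n. gamma_phi t phi n i (ds i) p m)))"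

text \<open>Residue map tau : D(B) \<rightarrow> D(A), d \<mapsto> operator induced by d on B/tB \<simeq> A.\<close>
definition residue :: "(nat \<Rightarrow> 'b \<Rightarrow> 'a) \<Rightarrow> ('b \<Rightarrow> 'b) \<Rightarrow> ('a \<Rightarrow> 'a)" where
  "residue phi d = (\<lambda>a. phi 0 (d (SOME b. phi 0 b = a)))"

definition act_tens :: "'b::ring_1 \<Rightarrow> nat \<Rightarrow> (('a::comm_ring_1 \<Rightarrow> 'a) \<Rightarrow> ('b \<Rightarrow> 'b))
                          \<Rightarrow> (nat \<Rightarrow> 'a) \<Rightarrow> 'b \<Rightarrow> 'b" where
  "act_tens t n s = (\<lambda>f b. \<Sum>j\<le>n. t ^ j * s (\<lambda>x. f j * x) b)"

end

(*
  Both rings consist of t-linear operators that are differential relative to a set of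
  operators: D(B) relative to the left multiplications L_b, the other ring relative to the
  operators sum_j t^j s(a_j). Everything rests on a transfer principle: if every operator of G
  expands as sum_l t^l S_l with S_0 in Z and S_l of Z-order less than c l, then, because
  t^(n+1) = 0, a Z-differential operator of order j is G-differential of order at most
  j + c (n + 1).

  For D(B) in the other ring: s(a) = L_b + t e with e in D(B), because the kernel of the
  residue map is t D(B) (this is where the deformation hypothesis is used). Finitely many
  generators of A give a uniform c, and since the s(a) commute, orders relative to them pass
  to the algebra they generate, which contains every sum_j t^j s(a_j).

  Conversely, every element of D(B) is a t-adic series sum_k t^k s(D_k). For every b one
  finds L_b = sum_k t^k s(D_k) with D_0 a multiplication and D_k of order at most c k: first
  for lifts of the generators, then for sums and products, and finally for all b by t-adic
  approximation.
*)

theory Submission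
  imports Defs "HOL.Modules"
begin

section \<open>Differential operators relative to a set of operators\<close>

definition ad :: "('m \<Rightarrow> 'm) \<Rightarrow> ('m \<Rightarrow> 'm) \<Rightarrow> 'm \<Rightarrow> 'm::ab_group_add" where
  "ad z d = (\<lambda>x. z (d x) - d (z x))"

lemma comm_op_eq_ad: "comm_op act = (\<lambda>f. ad (act f))"
  by (simp add: fun_eq_iff comm_op_def ad_def)

text \<open>\<open>ad_kills Z (Suc m) d\<close> says that \<open>d\<close> lies in \<open>D\<^sup>m\<close> relative to \<open>Z\<close>.\<close>

fun ad_kills :: "('m \<Rightarrow> 'm) set \<Rightarrow> nat \<Rightarrow> ('m::ab_group_add \<Rightarrow> 'm) \<Rightarrow> bool" where
  "ad_kills Z 0 d \<longleftrightarrow> d = (\<lambda>x. 0)"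
| "ad_kills Z (Suc m) d \<longleftrightarrow> (\<forall>z\<in>Z. ad_kills Z m (ad z d))"

lemma additive_ad: "additive z \<Longrightarrow> additive d \<Longrightarrow> additive (ad z d)"
  by (simp add: additive_def ad_def algebra_simps)

lemma additive_comp: "additive f \<Longrightarrow> additive g \<Longrightarrow> additive (\<lambda>x. f (g x))"
  by (simp add: additive_def)

lemma additive_add: "additive f \<Longrightarrow> additive g \<Longrightarrow> additive (\<lambda>x. f x + g x)"
  by (simp add: additive_def algebra_simps)

lemma additive_diff: "additive f \<Longrightarrow> additive g \<Longrightarrow> additive (\<lambda>x. f x - g x)"
  by (simp add: additive_def algebra_simps)

lemma additive_left_mult: "additive (\<lambda>x. (b::'r::ring) * x)"
  by (simp add: additive_def distrib_left)

lemma ad_zero_right: "additive z \<Longrightarrow> ad z (\<lambda>x. 0) = (\<lambda>x. 0)"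
  using additive.zero[of z] by (simp add: ad_def)

lemma ad_add_right:
  "additive z \<Longrightarrow> ad z (\<lambda>x. u x + v x) = (\<lambda>x. ad z u x + ad z v x)"
  using additive.add[of z] by (simp add: ad_def fun_eq_iff)

lemma ad_uminus_right: "additive z \<Longrightarrow> ad z (\<lambda>x. - u x) = (\<lambda>x. - ad z u x)"
  using additive.minus[of z] by (simp add: ad_def fun_eq_iff)

lemma ad_kills_zero: "\<forall>z\<in>Z. additive z \<Longrightarrow> ad_kills Z m (\<lambda>x. 0)"
  by (induction m) (simp_all add: ad_zero_right)

lemma ad_kills_add:
  "\<forall>z\<in>Z. additive z \<Longrightarrow> ad_kills Z m u \<Longrightarrow> ad_kills Z m v \<Longrightarrow> ad_kills Z m (\<lambda>x. u x + v x)"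
  by (induction m arbitrary: u v) (simp_all add: ad_add_right)

lemma ad_kills_uminus: "\<forall>z\<in>Z. additive z \<Longrightarrow> ad_kills Z m u \<Longrightarrow> ad_kills Z m (\<lambda>x. - u x)"
  by (induction m arbitrary: u) (simp_all add: ad_uminus_right)

lemma ad_kills_diff:
  "\<forall>z\<in>Z. additive z \<Longrightarrow> ad_kills Z m u \<Longrightarrow> ad_kills Z m v \<Longrightarrow> ad_kills Z m (\<lambda>x. u x - v x)"
  using ad_kills_add[of Z m u "\<lambda>x. - v x"] ad_kills_uminus[of Z m v] by simp

lemma ad_kills_sum:
  assumes "\<forall>z\<in>Z. additive z" "\<forall>i\<in>I. ad_kills Z m (F i)"
  shows "ad_kills Z m (\<lambda>x. \<Sum>i\<in>I. F i x)"
  using assms(2)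
  by (induction I rule: infinite_finite_induct) (simp_all add: assms(1) ad_kills_zero ad_kills_add)

lemma ad_kills_mono:
  "\<forall>z\<in>Z. additive z \<Longrightarrow> ad_kills Z m d \<Longrightarrow> m \<le> m' \<Longrightarrow> ad_kills Z m' d"
proof (induction m arbitrary: d m')
  case 0
  then show ?case using ad_kills_zero by simp
next
  case (Suc m)
  then obtain m'' where "m' = Suc m''" "m \<le> m''" by (cases m') auto
  with Suc show ?case by simp
qed

lemma ad_kills_subset: "Z' \<subseteq> Z \<Longrightarrow> ad_kills Z m d \<Longrightarrow> ad_kills Z' m d"
  by (induction m arbitrary: d) auto

lemma ad_kills_comp_left:
  assumes "additive w" "\<forall>z\<in>Z. \<forall>x. z (w x) = w (z x)"
  shows "ad_kills Z m u \<Longrightarrow> ad_kills Z m (\<lambda>x. w (u x))"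
proof (induction m arbitrary: u)
  case 0
  then show ?case by (simp add: additive.zero[OF assms(1)])
next
  case (Suc m)
  have "ad z (\<lambda>x. w (u x)) = (\<lambda>x. w (ad z u x))" if "z \<in> Z" for z
    using assms that by (simp add: ad_def fun_eq_iff additive.diff[OF assms(1)])
  with Suc show ?case by simp
qed

lemma ad_kills_comp_right:
  assumes "\<forall>z\<in>Z. \<forall>x. z (w x) = w (z x)"
  shows "ad_kills Z m u \<Longrightarrow> ad_kills Z m (\<lambda>x. u (w x))"
proof (induction m arbitrary: u)
  case (Suc m)
  have "ad z (\<lambda>x. u (w x)) = (\<lambda>x. ad z u (w x))" if "z \<in> Z" for z
    using assms that by (simp add: ad_def fun_eq_iff)
  with Suc show ?case by simp
qed simp

lemma ad_comp_right:
  "additive u \<Longrightarrow> ad z (\<lambda>x. u (v x)) = (\<lambda>x. ad z u (v x) + u (ad z v x))"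
  using additive.diff[of u] by (simp add: ad_def fun_eq_iff)

lemma ad_comp_left:
  "additive f \<Longrightarrow> ad (\<lambda>x. f (g x)) u = (\<lambda>x. f (ad g u x) + ad f u (g x))"
  using additive.diff[of f] by (simp add: ad_def fun_eq_iff)

lemma ad_kills_comp:
  assumes Z: "\<forall>z\<in>Z. additive z"
  shows "additive u \<Longrightarrow> additive v \<Longrightarrow> ad_kills Z (Suc a) u \<Longrightarrow> ad_kills Z (Suc b) v
    \<Longrightarrow> ad_kills Z (Suc (a + b)) (\<lambda>x. u (v x))"
proof (induction "a + b" arbitrary: a b u v)
  case 0
  then show ?case by (simp add: ad_comp_right additive.zero[OF "0.prems"(1)])
next
  case (Suc N)
  have "ad_kills Z (Suc N) (\<lambda>x. ad z u (v x) + u (ad z v x))" if z: "z \<in> Z" for z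
  proof (rule ad_kills_add[OF Z])
    show "ad_kills Z (Suc N) (\<lambda>x. ad z u (v x))"
    proof (cases a)
      case 0
      with Suc.prems z have "(\<lambda>x. ad z u (v x)) = (\<lambda>x. 0)" by simp
      then show ?thesis using ad_kills_zero[OF Z] by metis
    next
      case (Suc a')
      have "additive (ad z u)" using Z z Suc.prems(1) by (simp add: additive_ad)
      with Suc Suc.hyps(2) Suc.prems z show ?thesis
        using Suc.hyps(1)[of a' b "ad z u" v] by simp
    qed
    show "ad_kills Z (Suc N) (\<lambda>x. u (ad z v x))"
    proof (cases b)
      case 0
      with Suc.prems z have "(\<lambda>x. u (ad z v x)) = (\<lambda>x. 0)"
        by (simp add: additive.zero[OF Suc.prems(1)])
      then show ?thesis using ad_kills_zero[OF Z] by metis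
    next
      case (Suc b')
      have "additive (ad z v)" using Z z Suc.prems(2) by (simp add: additive_ad)
      with Suc Suc.hyps(2) Suc.prems z show ?thesis
        using Suc.hyps(1)[of a b' u "ad z v"] by simp
    qed
  qed
  with Suc.prems(1) Suc.hyps(2) show ?case by (simp add: ad_comp_right)
qed

lemma fold_comm_op_vanishes_iff:
  "(\<forall>fs. length fs = m \<longrightarrow> set fs \<subseteq> C \<longrightarrow> (\<forall>x\<in>UNIV. fold (comm_op act) fs d x = 0))
     \<longleftrightarrow> ad_kills (act ` C) m d"
  unfolding comm_op_eq_ad
proof (induction m arbitrary: d)
  case 0
  then show ?case by (auto simp: fun_eq_iff)
next
  case (Suc m)
  have "(\<forall>fs. length fs = Suc m \<longrightarrow> set fs \<subseteq> C \<longrightarrow> (\<forall>x\<in>UNIV. fold (\<lambda>f. ad (act f)) fs d x = 0))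
    \<longleftrightarrow> (\<forall>f\<in>C. \<forall>fs. length fs = m \<longrightarrow> set fs \<subseteq> C
          \<longrightarrow> (\<forall>x\<in>UNIV. fold (\<lambda>f. ad (act f)) fs (ad (act f) d) x = 0))"
    (is "?all \<longleftrightarrow> ?cons")
  proof
    assume ?all
    show ?cons
    proof (intro ballI allI impI)
      fix f fs x assume "f \<in> C" "length fs = m" "set fs \<subseteq> C"
      then show "fold (\<lambda>f. ad (act f)) fs (ad (act f) d) x = 0"
        using \<open>?all\<close>[rule_format, of "f # fs" x] by simp
    qed
  next
    assume ?cons
    show ?all
    proof (intro allI impI ballI)
      fix fs :: "'a list" and x assume "length fs = Suc m" "set fs \<subseteq> C"
      then obtain f fs' where "fs = f # fs'" by (cases fs) auto
      with \<open>?cons\<close> \<open>length fs = Suc m\<close> \<open>set fs \<subseteq> C\<close>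
      show "fold (\<lambda>f. ad (act f)) fs d x = 0" by simp
    qed
  qed
  with Suc show ?case by simp
qed

lemma diffops_UNIV_eq:
  assumes "\<forall>f\<in>C. additive (act f)"
  shows "diffops UNIV E act C = {d \<in> E. \<exists>m. ad_kills (act ` C) m d}"
proof -
  have "(\<exists>m. ad_kills (act ` C) (Suc m) d) \<longleftrightarrow> (\<exists>m. ad_kills (act ` C) m d)" for d
    using ad_kills_mono[of "act ` C" _ d] assms by (metis image_iff le_add2 plus_1_eq_Suc)
  then show ?thesis
    unfolding diffops_def diffop_ord_def fold_comm_op_vanishes_iff by auto
qed

inductive_set op_closure :: "('m \<Rightarrow> 'm) set \<Rightarrow> ('m \<Rightarrow> 'm::ab_group_add) set" for G where
  gen: "g \<in> G \<Longrightarrow> g \<in> op_closure G"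
| zero: "(\<lambda>x. 0) \<in> op_closure G"
| add: "f \<in> op_closure G \<Longrightarrow> g \<in> op_closure G \<Longrightarrow> (\<lambda>x. f x + g x) \<in> op_closure G"
| comp: "f \<in> op_closure G \<Longrightarrow> g \<in> op_closure G \<Longrightarrow> (\<lambda>x. f (g x)) \<in> op_closure G"

lemma op_closure_sum:
  "\<forall>i\<in>I. F i \<in> op_closure G \<Longrightarrow> (\<lambda>x. \<Sum>i\<in>I. F i x) \<in> op_closure G"
  by (induction I rule: infinite_finite_induct) (auto intro: op_closure.intros)

lemma op_closure_additive:
  assumes "\<forall>g\<in>G. additive g"
  shows "f \<in> op_closure G \<Longrightarrow> additive f"
  by (induction f rule: op_closure.induct) (use assms in \<open>auto intro: additive_add additive_comp simp: additive_def\<close>)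

lemma op_closure_commute:
  assumes "\<forall>g\<in>G. additive g" "\<forall>g\<in>G. \<forall>h\<in>G. \<forall>x. g (h x) = h (g x)"
  shows "f \<in> op_closure G \<Longrightarrow> g \<in> G \<Longrightarrow> g (f x) = f (g x)"
proof (induction f arbitrary: x rule: op_closure.induct)
  case zero
  then show ?case using assms(1) additive.zero[of g] by simp
next
  case (add f h)
  then show ?case using assms(1) additive.add[of g] by simp
qed (use assms(2) in auto)

lemma ad_kills_ad_op_closure:
  assumes G: "\<forall>g\<in>G. additive g" and comm: "\<forall>g\<in>G. \<forall>h\<in>G. \<forall>x. g (h x) = h (g x)"
  shows "f \<in> op_closure G \<Longrightarrow> additive u \<Longrightarrow> ad_kills G (Suc m) u \<Longrightarrow> ad_kills G m (ad f u)"
proof (induction f arbitrary: u rule: op_closure.induct)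
  case zero
  then show ?case using ad_kills_zero[OF G] by (simp add: ad_def additive.zero[OF zero.prems(1)])
next
  case (add f g)
  have "ad (\<lambda>x. f x + g x) u = (\<lambda>x. ad f u x + ad g u x)"
    using additive.add[OF add.prems(1)] by (simp add: ad_def fun_eq_iff)
  with add show ?case by (simp add: ad_kills_add[OF G])
next
  case (comp f g)
  have "ad (\<lambda>x. f (g x)) u = (\<lambda>x. f (ad g u x) + ad f u (g x))"
    using ad_comp_left[OF op_closure_additive[OF G comp.hyps(1)]] .
  moreover have "ad_kills G m (\<lambda>x. f (ad g u x))"
  proof (rule ad_kills_comp_left[of f])
    show "additive f" by (rule op_closure_additive[OF G comp.hyps(1)])
    show "\<forall>z\<in>G. \<forall>x. z (f x) = f (z x)" using op_closure_commute[OF G comm comp.hyps(1)] by blast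
  qed (rule comp.IH(2)[OF comp.prems])
  moreover have "ad_kills G m (\<lambda>x. ad f u (g x))"
  proof (rule ad_kills_comp_right[of G g])
    show "\<forall>z\<in>G. \<forall>x. z (g x) = g (z x)" using op_closure_commute[OF G comm comp.hyps(2)] by blast
  qed (rule comp.IH(1)[OF comp.prems])
  ultimately show ?case by (simp add: ad_kills_add[OF G])
qed simp

lemma ad_kills_op_closure:
  assumes "\<forall>g\<in>G. additive g" "\<forall>g\<in>G. \<forall>h\<in>G. \<forall>x. g (h x) = h (g x)"
  shows "additive u \<Longrightarrow> ad_kills G m u \<Longrightarrow> ad_kills (op_closure G) m u"
proof (induction m arbitrary: u)
  case (Suc m)
  have "ad_kills (op_closure G) m (ad f u)" if "f \<in> op_closure G" for f
    using Suc ad_kills_ad_op_closure[OF assms that] additive_ad[OF op_closure_additive[OF assms(1) that]]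
    by simp
  then show ?case by simp
qed simp

section \<open>\<open>t\<close>-linear operators and \<open>t\<close>-adic series\<close>

definition t_linear :: "'b::ring_1 \<Rightarrow> ('b \<Rightarrow> 'b) \<Rightarrow> bool" where
  "t_linear t f \<longleftrightarrow> additive f \<and> (\<forall>x. f (t * x) = t * f x)"

lemma t_linear_power: "t_linear t f \<Longrightarrow> f (t ^ k * x) = t ^ k * f x"
  by (induction k arbitrary: x) (auto simp: t_linear_def mult.assoc)

lemma t_linear_ad: "t_linear t f \<Longrightarrow> t_linear t g \<Longrightarrow> t_linear t (ad f g)"
  by (simp add: t_linear_def additive_ad) (simp add: ad_def right_diff_distrib)

lemma t_linear_zero: "t_linear t (\<lambda>x. 0)"
  by (simp add: t_linear_def additive_def)

lemma t_linear_add: "t_linear t f \<Longrightarrow> t_linear t g \<Longrightarrow> t_linear t (\<lambda>x. f x + g x)"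
  by (simp add: t_linear_def additive_add distrib_left)

lemma t_linear_comp: "t_linear t f \<Longrightarrow> t_linear t g \<Longrightarrow> t_linear t (\<lambda>x. f (g x))"
  by (simp add: t_linear_def additive_comp)

lemma t_linear_sum: "\<forall>i\<in>I. t_linear t (F i) \<Longrightarrow> t_linear t (\<lambda>x. \<Sum>i\<in>I. F i x)"
  by (induction I rule: infinite_finite_induct) (simp_all add: t_linear_zero t_linear_add)

lemma t_linear_power_mult: "t_linear t f \<Longrightarrow> t_linear t (\<lambda>x. t ^ k * f x)"
  by (simp add: t_linear_def additive_def distrib_left mult.assoc power_commutes flip: mult.assoc)

lemma nilpotent_power_eq_0: "t ^ Suc n = 0 \<Longrightarrow> n < k \<Longrightarrow> (t::'a::semiring_1) ^ k = 0"
  by (metis Suc_leI le_Suc_ex power_add mult_zero_left)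

definition t_series :: "'b::ring_1 \<Rightarrow> nat \<Rightarrow> (nat \<Rightarrow> 'b \<Rightarrow> 'b) \<Rightarrow> 'b \<Rightarrow> 'b" where
  "t_series t n S = (\<lambda>x. \<Sum>k\<le>n. t ^ k * S k x)"

lemma t_linear_t_series: "\<forall>k. t_linear t (S k) \<Longrightarrow> t_linear t (t_series t n S)"
  unfolding t_series_def by (simp add: t_linear_sum t_linear_power_mult)

lemma ad_t_series_power_mult:
  assumes S: "\<forall>l. t_linear t (S l)" and u: "t_linear t u"
  shows "ad (t_series t n S) (\<lambda>x. t ^ k * u x) = (\<lambda>x. \<Sum>l\<le>n. t ^ (k + l) * ad (S l) u x)"
proof
  fix x
  have "t ^ l * S l (t ^ k * u x) = t ^ (k + l) * S l (u x)" for l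
    using t_linear_power[of t "S l" k] S by (simp add: add.commute flip: mult.assoc power_add)
  moreover have "t ^ k * u (\<Sum>l\<le>n. t ^ l * S l x) = (\<Sum>l\<le>n. t ^ (k + l) * u (S l x))"
  proof -
    have "u (\<Sum>l\<le>n. t ^ l * S l x) = (\<Sum>l\<le>n. t ^ l * u (S l x))"
      using u by (simp add: t_linear_def additive.sum t_linear_power[OF u])
    then show ?thesis by (simp add: sum_distrib_left power_add mult.assoc)
  qed
  ultimately show "ad (t_series t n S) (\<lambda>x. t ^ k * u x) x = (\<Sum>l\<le>n. t ^ (k + l) * ad (S l) u x)"
    by (simp add: ad_def t_series_def sum_subtractf right_diff_distrib)
qed

lemma t_series_add:
  "(\<lambda>x. t_series t n F x + t_series t n G x) = t_series t n (\<lambda>k x. F k x + G k x)"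
  by (simp add: t_series_def fun_eq_iff sum.distrib distrib_left)

lemma t_series_single: "t_series t n (\<lambda>k. if k = 0 then A else (\<lambda>x. 0)) = A"
  by (simp add: t_series_def fun_eq_iff if_distrib if_distribR sum.delta cong: if_cong)

lemma t_series_shift:
  assumes "t ^ Suc n = 0"
  shows "(\<lambda>x. t * t_series t n F x) = t_series t n (\<lambda>k. if k = 0 then (\<lambda>x. 0) else F (k - 1))"
proof (cases n)
  case 0
  with assms show ?thesis by (simp add: t_series_def)
next
  case (Suc m)
  show ?thesis
  proof
    fix x
    have "t * t_series t n F x = (\<Sum>k\<le>m. t ^ Suc k * F k x) + t ^ Suc n * F n x"
      by (simp add: t_series_def Suc sum_distrib_left distrib_left mult.assoc)
    also have "\<dots> = t_series t n (\<lambda>k. if k = 0 then (\<lambda>x. 0) else F (k - 1)) x"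
      using assms by (simp add: t_series_def Suc sum.atMost_Suc_shift del: sum.atMost_Suc)
    finally show "t * t_series t n F x = t_series t n (\<lambda>k. if k = 0 then (\<lambda>x. 0) else F (k - 1)) x" .
  qed
qed

lemma t_series_two_terms:
  assumes "t ^ Suc n = 0"
  shows "t_series t n (\<lambda>k. if k = 0 then A0 else if k = 1 then A1 else (\<lambda>x. 0)) = (\<lambda>x. A0 x + t * A1 x)"
proof
  fix x
  have "t_series t n (\<lambda>k. if k = 0 then A0 else if k = 1 then A1 else (\<lambda>x. 0)) x
      = (\<Sum>k\<le>n. (if k = 0 then A0 x else 0) + (if k = 1 then t * A1 x else 0))"
    unfolding t_series_def by (intro sum.cong refl) auto
  also have "\<dots> = A0 x + (if 1 \<le> n then t * A1 x else 0)"
    by (simp add: sum.distrib sum.delta)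
  also have "\<dots> = A0 x + t * A1 x"
    using assms by (cases n) auto
  finally show "t_series t n (\<lambda>k. if k = 0 then A0 else if k = 1 then A1 else (\<lambda>x. 0)) x
      = A0 x + t * A1 x" .
qed

definition op_cauchy :: "(nat \<Rightarrow> 'm \<Rightarrow> 'm) \<Rightarrow> (nat \<Rightarrow> 'm \<Rightarrow> 'm) \<Rightarrow> nat \<Rightarrow> 'm \<Rightarrow> 'm::ab_group_add" where
  "op_cauchy F G = (\<lambda>K x. \<Sum>k\<le>K. F k (G (K - k) x))"

lemma t_series_comp:
  assumes tn: "t ^ Suc n = 0" and F: "\<forall>k. t_linear t (F k)"
  shows "(\<lambda>x. t_series t n F (t_series t n G x)) = t_series t n (op_cauchy F G)"
proof
  fix x
  define h where "h = (\<lambda>(k, k'). t ^ (k + k') * F k (G k' x))"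
  have "F k (\<Sum>k'\<le>n. t ^ k' * G k' x) = (\<Sum>k'\<le>n. t ^ k' * F k (G k' x))" for k
    using F by (simp add: t_linear_def additive.sum t_linear_power[OF F[rule_format]])
  then have "t_series t n F (t_series t n G x) = (\<Sum>k\<le>n. \<Sum>k'\<le>n. h (k, k'))"
    by (simp add: t_series_def h_def sum_distrib_left power_add mult.assoc)
  also have "\<dots> = sum h {(i, j). i + j \<le> n}"
  proof -
    have "sum h ({..n} \<times> {..n}) = sum h {(i, j). i + j \<le> n}"
    proof (rule sum.mono_neutral_right)
      show "\<forall>p\<in>{..n} \<times> {..n} - {(i, j). i + j \<le> n}. h p = 0"
      proof
        fix p assume "p \<in> {..n} \<times> {..n} - {(i, j). i + j \<le> n}"
        then obtain i j where "p = (i, j)" "n < i + j" by auto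
        then show "h p = 0" using nilpotent_power_eq_0[OF tn] by (simp add: h_def)
      qed
    qed auto
    then show ?thesis by (simp add: sum.cartesian_product)
  qed
  also have "\<dots> = (\<Sum>K\<le>n. \<Sum>k\<le>K. h (k, K - k))"
    using sum.triangle_reindex_eq[of "\<lambda>i j. h (i, j)" n] by (simp add: case_prod_beta')
  also have "\<dots> = t_series t n (op_cauchy F G) x"
    by (simp add: t_series_def op_cauchy_def h_def sum_distrib_left)
  finally show "t_series t n F (t_series t n G x) = t_series t n (op_cauchy F G) x" .
qed

section \<open>Transfer of differential operators along graded expansions\<close>

definition graded_family :: "('m \<Rightarrow> 'm) set \<Rightarrow> nat \<Rightarrow> nat \<Rightarrow> (nat \<Rightarrow> 'm \<Rightarrow> 'm::ab_group_add) \<Rightarrow> bool" where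
  "graded_family Z n c S \<longleftrightarrow> S 0 \<in> Z \<and> (\<forall>l\<in>{1..n}. ad_kills Z (c * l) (S l))"

definition graded_over :: "'b::ring_1 \<Rightarrow> nat \<Rightarrow> ('b \<Rightarrow> 'b) set \<Rightarrow> nat \<Rightarrow> ('b \<Rightarrow> 'b) \<Rightarrow> bool" where
  "graded_over t n Z c g \<longleftrightarrow>
     (\<exists>S. g = t_series t n S \<and> (\<forall>l. t_linear t (S l)) \<and> graded_family Z n c S)"


lemma graded_over_t_linear: "graded_over t n Z c g \<Longrightarrow> t_linear t g"
  by (auto simp: graded_over_def intro: t_linear_t_series)

lemma graded_over_two_terms:
  assumes "t ^ Suc n = 0" "\<forall>z\<in>Z. additive z" "A0 \<in> Z" "t_linear t A0" "t_linear t A1" "ad_kills Z c A1"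
  shows "graded_over t n Z c (\<lambda>x. A0 x + t * A1 x)"
  unfolding graded_over_def graded_family_def
  by (rule exI[of _ "\<lambda>k. if k = 0 then A0 else if k = 1 then A1 else (\<lambda>x. 0)"])
    (use assms in \<open>auto simp: t_series_two_terms t_linear_zero ad_kills_zero\<close>)

lemma ad_kills_ad_graded_family:
  assumes Z: "\<forall>z\<in>Z. additive z" and "graded_family Z n c S" "l \<le> n"
    and "additive (S l)" "additive u" "ad_kills Z (Suc j) u"
  shows "ad_kills Z (j + c * l) (ad (S l) u)"
proof (cases "l = 0")
  case True
  with assms show ?thesis by (simp add: graded_family_def)
next
  case False
  then have S: "ad_kills Z (c * l) (S l)" using assms(2,3) by (simp add: graded_family_def)
  show ?thesis
  proof (cases "c * l")
    case 0
    with S have "ad (S l) u = (\<lambda>x. 0)" by (simp add: ad_def additive.zero[OF assms(5)])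
    then show ?thesis using ad_kills_zero[OF Z] by metis
  next
    case (Suc r)
    with S have S': "ad_kills Z (Suc r) (S l)" by simp
    have "ad_kills Z (Suc (r + j)) (\<lambda>x. S l (u x))"
      by (rule ad_kills_comp[OF Z assms(4,5) S' assms(6)])
    moreover have "ad_kills Z (Suc (j + r)) (\<lambda>x. u (S l x))"
      by (rule ad_kills_comp[OF Z assms(5,4) assms(6) S'])
    ultimately have "ad_kills Z (Suc (r + j)) (\<lambda>x. S l (u x) - u (S l x))"
      by (simp only: add.commute ad_kills_diff[OF Z])
    with Suc show ?thesis by (simp only: ad_def add.commute add_Suc_right)
  qed
qed

text \<open>Commuting \<open>t^k u\<close> with \<open>g = \<Sum> t^l S_l\<close> yields \<open>\<Sum> t^(k+l) [S_l, u]\<close>: every term either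
  has lower \<open>Z\<close>-order or a higher power of \<open>t\<close>, so the weight \<open>j + c (n + 1 - k)\<close> drops by one,
  and \<open>t^(n+1) = 0\<close> ends the recursion.\<close>

lemma ad_kills_t_power_mult:
  fixes t :: "'b::ring_1"
  assumes tn: "t ^ Suc n = 0" and Z: "\<forall>z\<in>Z. t_linear t z" and G: "\<forall>g\<in>G. graded_over t n Z c g"
  shows "t_linear t u \<Longrightarrow> ad_kills Z j u \<Longrightarrow> j + c * (Suc n - k) \<le> N
    \<Longrightarrow> ad_kills G N (\<lambda>x. t ^ k * u x)"
proof (induction N arbitrary: k j u)
  case 0
  then show ?case by simp
next
  case (Suc N)
  have ZA: "\<forall>z\<in>Z. additive z" using Z by (simp add: t_linear_def)
  have GA: "\<forall>g\<in>G. additive g"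
    using G graded_over_t_linear t_linear_def by blast
  show ?case
  proof (cases j)
    case 0
    with Suc.prems have "(\<lambda>x. t ^ k * u x) = (\<lambda>x. 0)" by simp
    then show ?thesis using ad_kills_zero[OF GA] by metis
  next
    case (Suc j')
    have "ad_kills G N (ad g (\<lambda>x. t ^ k * u x))" if g: "g \<in> G" for g
    proof -
      obtain S where S: "g = t_series t n S" "\<forall>l. t_linear t (S l)" "graded_family Z n c S"
        using G g by (auto simp: graded_over_def)
      have "ad_kills G N (\<lambda>x. t ^ (k + l) * ad (S l) u x)" if l: "l \<le> n" for l
      proof (cases "n < k + l")
        case True
        then show ?thesis using ad_kills_zero[OF GA] nilpotent_power_eq_0[OF tn] by simp
      next
        case False
        have "ad_kills Z (j' + c * l) (ad (S l) u)"
          using ad_kills_ad_graded_family[OF ZA S(3) l] S(2) Suc Suc.prems(1,2)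
          by (simp add: t_linear_def)
        moreover have "j' + c * l + c * (Suc n - (k + l)) \<le> N"
        proof -
          have "c * (Suc n - k) = c * l + c * (Suc n - (k + l))"
            using False by (simp flip: distrib_left)
          with Suc.prems(3) Suc show ?thesis by simp
        qed
        ultimately show ?thesis
          using Suc.IH t_linear_ad S(2) Suc.prems(1) by blast
      qed
      then have "ad_kills G N (\<lambda>x. \<Sum>l\<le>n. t ^ (k + l) * ad (S l) u x)"
        by (intro ad_kills_sum[OF GA]) simp
      then show ?thesis using ad_t_series_power_mult[OF S(2) Suc.prems(1)] S(1) by simp
    qed
    then show ?thesis by simp
  qed
qed

lemma ad_kills_transfer:
  assumes "t ^ Suc n = 0" "\<forall>z\<in>Z. t_linear t z" "\<forall>g\<in>G. graded_over t n Z c g"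
    and "t_linear t u" "ad_kills Z j u"
  shows "ad_kills G (j + c * Suc n) u"
  using ad_kills_t_power_mult[OF assms, of 0] by simp

lemma graded_family_add:
  assumes "\<forall>z\<in>Z. additive z" "\<forall>y\<in>Z. \<forall>z\<in>Z. (\<lambda>x. y x + z x) \<in> Z"
    and "graded_family Z n c D" "graded_family Z n c E"
  shows "graded_family Z n c (\<lambda>k x. D k x + E k x)"
  using assms by (simp add: graded_family_def ad_kills_add)

lemma ad_kills_commutative:
  "\<forall>y\<in>Z. \<forall>z\<in>Z. \<forall>x. y (z x) = z (y x) \<Longrightarrow> z \<in> Z \<Longrightarrow> ad_kills Z (Suc 0) z"
  by (simp add: ad_def)

lemma graded_family_cauchy:
  assumes Z: "\<forall>z\<in>Z. additive z" and comm: "\<forall>y\<in>Z. \<forall>z\<in>Z. \<forall>x. y (z x) = z (y x)"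
    and comp: "\<forall>y\<in>Z. \<forall>z\<in>Z. (\<lambda>x. y (z x)) \<in> Z" and c: "1 \<le> c"
    and D: "\<forall>k. additive (D k)" "graded_family Z n c D"
    and E: "\<forall>k. additive (E k)" "graded_family Z n c E"
  shows "graded_family Z n c (op_cauchy D E)"
proof -
  define ord where "ord k = (if k = 0 then 1 else c * k)" for k
  have ord: "ord k = Suc (ord k - 1)" for k
    using c by (simp add: ord_def)
  have D_ord: "ad_kills Z (ord k) (D k)" and E_ord: "ad_kills Z (ord k) (E k)" if "k \<le> n" for k
    using that D(2) E(2) ad_kills_commutative[OF comm]
    by (auto simp: ord_def graded_family_def simp del: ad_kills.simps)
  have terms: "ad_kills Z (c * K) (\<lambda>x. D k (E (K - k) x))" if "K \<in> {1..n}" "k \<le> K" for K k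
  proof (rule ad_kills_mono[OF Z])
    have "k \<le> n" "K - k \<le> n" using that by auto
    show "ad_kills Z (Suc (ord k - 1 + (ord (K - k) - 1))) (\<lambda>x. D k (E (K - k) x))"
    proof (rule ad_kills_comp[OF Z D(1)[rule_format] E(1)[rule_format]])
      show "ad_kills Z (Suc (ord k - 1)) (D k)" using D_ord[OF \<open>k \<le> n\<close>] by (metis ord)
      show "ad_kills Z (Suc (ord (K - k) - 1)) (E (K - k))"
        using E_ord[OF \<open>K - k \<le> n\<close>] by (metis ord)
    qed
    show "Suc (ord k - 1 + (ord (K - k) - 1)) \<le> c * K"
    proof (cases "k = 0 \<or> k = K")
      case True
      with that c show ?thesis by (auto simp: ord_def)
    next
      case False
      then have "ord k + ord (K - k) = c * K" "1 \<le> ord k" "1 \<le> ord (K - k)"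
        using that c by (auto simp: ord_def simp flip: distrib_left)
      then show ?thesis by linarith
    qed
  qed
  have "ad_kills Z (c * K) (op_cauchy D E K)" if "K \<in> {1..n}" for K
    unfolding op_cauchy_def using terms that by (intro ad_kills_sum[OF Z]) simp
  moreover have "op_cauchy D E 0 \<in> Z"
    using D(2) E(2) comp[rule_format, of "D 0" "E 0"] by (simp add: graded_family_def op_cauchy_def)
  ultimately show ?thesis by (simp add: graded_family_def)
qed

section \<open>Deformations with a section\<close>

locale deformation_with_section =
  fixes iA :: "'k::field \<Rightarrow> 'a::comm_ring_1"
    and iB :: "'k \<Rightarrow> 'b::ring_1"
    and t :: 'b
    and n :: nat
    and phi :: "nat \<Rightarrow> 'b \<Rightarrow> 'a"
    and s :: "('a \<Rightarrow> 'a) \<Rightarrow> ('b \<Rightarrow> 'b)"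
  assumes A_fg: "fin_gen_alg iA"
    and B_alg: "ring_hom_fun iB"
    and iB_central: "\<forall>c b. iB c * b = b * iB c"
    and t_central: "\<forall>b. t * b = b * t"
    and t_nilp: "t ^ Suc n = 0"
    and grB: "gr_iso iA iB t n phi"
    and deform: "induces_deformation iA iB t n phi"
    and s_into: "\<forall>d\<in>D_A iA. s d \<in> D_B iB t"
    and s_add: "\<forall>d\<in>D_A iA. \<forall>e\<in>D_A iA. s (\<lambda>x. d x + e x) = (\<lambda>x. s d x + s e x)"
    and s_mult: "\<forall>d\<in>D_A iA. \<forall>e\<in>D_A iA. s (d \<circ> e) = s d \<circ> s e"
    and s_one: "s id = id"
    and s_scal: "\<forall>c. \<forall>d\<in>D_A iA. s (\<lambda>x. iA c * d x) = (\<lambda>x. iB c * s d x)"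
    and s_section: "\<forall>d\<in>D_A iA. residue phi (s d) = d"
begin

abbreviation EB :: "('b \<Rightarrow> 'b) set" where
  "EB \<equiv> End_B iB t"

abbreviation EA :: "('a \<Rightarrow> 'a) set" where
  "EA \<equiv> klin_end UNIV (\<lambda>c x. iA c * x)"

abbreviation LB :: "('b \<Rightarrow> 'b) set" where
  "LB \<equiv> range (\<lambda>b x. b * x)"

abbreviation LA :: "('a \<Rightarrow> 'a) set" where
  "LA \<equiv> range (\<lambda>a x. a * x)"

abbreviation act_ops :: "('b \<Rightarrow> 'b) set" where
  "act_ops \<equiv> act_tens t n s ` tens n"

lemma t_power_commute: "t ^ k * b = b * t ^ k"
  by (simp add: power_commuting_commutes t_central)

lemma EB_iff: "d \<in> EB \<longleftrightarrow> t_linear t d \<and> (\<forall>c x. d (iB c * x) = iB c * d x)"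
  by (auto simp: End_B_def kn_end_def klin_end_def t_linear_def additive_def)

lemma EB_left_mult: "(\<lambda>x. b * x) \<in> EB"
proof -
  have "b * (t * x) = t * (b * x)" "b * (iB c * x) = iB c * (b * x)" for c x
    by (metis mult.assoc t_central) (metis mult.assoc iB_central)
  then show ?thesis by (simp add: EB_iff t_linear_def additive_left_mult)
qed

lemma EB_comp: "f \<in> EB \<Longrightarrow> g \<in> EB \<Longrightarrow> (\<lambda>x. f (g x)) \<in> EB"
  by (simp add: EB_iff t_linear_comp)

lemma EB_add: "f \<in> EB \<Longrightarrow> g \<in> EB \<Longrightarrow> (\<lambda>x. f x + g x) \<in> EB"
  by (simp add: EB_iff t_linear_add distrib_left)

lemma EB_diff: "f \<in> EB \<Longrightarrow> g \<in> EB \<Longrightarrow> (\<lambda>x. f x - g x) \<in> EB"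
  by (simp add: EB_iff t_linear_def additive_diff right_diff_distrib)

lemma EB_zero: "(\<lambda>x. 0) \<in> EB"
  using EB_left_mult[of 0] by simp

lemma EB_sum: "\<forall>i\<in>I. F i \<in> EB \<Longrightarrow> (\<lambda>x. \<Sum>i\<in>I. F i x) \<in> EB"
  by (induction I rule: infinite_finite_induct) (simp_all add: EB_zero EB_add)

lemma EB_ad: "f \<in> EB \<Longrightarrow> g \<in> EB \<Longrightarrow> ad f g \<in> EB"
  unfolding ad_def by (rule EB_diff[OF EB_comp[of f g] EB_comp[of g f]])

lemma LB_t_linear: "\<forall>z\<in>LB. t_linear t z"
  using EB_left_mult by (auto simp: EB_iff)

lemma LB_additive: "\<forall>z\<in>LB. additive z"
  using LB_t_linear by (simp add: t_linear_def)

lemma phi_degree: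
  assumes "j \<le> n"
  shows "\<forall>x\<in>tpow_set t j. \<forall>y\<in>tpow_set t j. phi j (x + y) = phi j x + phi j y"
    and "\<forall>c. \<forall>x\<in>tpow_set t j. phi j (iB c * x) = iA c * phi j x"
    and "phi j ` tpow_set t j = UNIV"
    and "{x \<in> tpow_set t j. phi j x = 0} = tpow_set t (Suc j)"
  using grB assms unfolding gr_iso_def by auto

lemma tpow_set_0: "tpow_set t 0 = UNIV"
  by (simp add: tpow_set_def)

lemma phi0_additive: "additive (phi 0)"
  using phi_degree(1)[of 0] by (simp add: additive_def tpow_set_0)

lemma phi0_scal: "phi 0 (iB c * x) = iA c * phi 0 x"
  using phi_degree(2)[of 0] by (simp add: tpow_set_0)

lemma phi0_mult: "phi 0 (x * y) = phi 0 x * phi 0 y"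
proof -
  have "\<forall>i j. i + j \<le> n \<longrightarrow> (\<forall>x\<in>tpow_set t i. \<forall>y\<in>tpow_set t j.
      phi (i + j) (x * y) = phi i x * phi j y)"
    using grB unfolding gr_iso_def by blast
  from this[rule_format, of 0 0 x y] show ?thesis by (simp add: tpow_set_0)
qed

lemma phi0_one: "phi 0 1 = 1"
  using grB unfolding gr_iso_def by blast

lemma phi0_surj: "\<exists>b. phi 0 b = a"
  using phi_degree(3)[of 0] by (metis UNIV_I image_iff le0 tpow_set_0)

lemma phi0_eq_0_iff: "phi 0 x = 0 \<longleftrightarrow> (\<exists>b. x = t * b)"
  using phi_degree(4)[of 0] by (auto simp: tpow_set_def set_eq_iff)

lemma phi0_t_mult: "phi 0 (t * x) = 0"
  using phi0_eq_0_iff by auto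

lemma phi0_iB: "phi 0 (iB c) = iA c"
  using phi0_scal[of c 1] phi0_one by simp

lemma phi0_some: "phi 0 (SOME b. phi 0 b = a) = a"
  using someI_ex[OF phi0_surj] .

lemma commutator_in_tB: "\<exists>w. b * c - c * b = t * w"
proof -
  have "phi 0 (b * c - c * b) = 0"
    by (simp add: additive.diff[OF phi0_additive] phi0_mult mult.commute)
  then show ?thesis using phi0_eq_0_iff by blast
qed

lemma ad_kills_left_mult_t_power: "n < N + j \<Longrightarrow> ad_kills LB N (\<lambda>x. (t ^ j * c) * x)"
proof (induction N arbitrary: j c)
  case 0
  then show ?case by (simp add: nilpotent_power_eq_0[OF t_nilp])
next
  case (Suc N)
  have "ad_kills LB N (ad (\<lambda>x. b * x) (\<lambda>x. (t ^ j * c) * x))" for b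
  proof -
    obtain w where w: "b * c - c * b = t * w" using commutator_in_tB by blast
    have "b * (t ^ j * c) = t ^ j * (b * c)"
      by (simp only: t_power_commute mult.assoc)
    then have "b * (t ^ j * c) - (t ^ j * c) * b = t ^ j * (b * c - c * b)"
      by (simp add: right_diff_distrib mult.assoc)
    also have "\<dots> = t ^ Suc j * w"
      by (metis w mult.assoc power_Suc2)
    finally have comm: "b * (t ^ j * c) - (t ^ j * c) * b = t ^ Suc j * w" .
    have "b * ((t ^ j * c) * x) - (t ^ j * c) * (b * x) = (t ^ Suc j * w) * x" for x
      by (metis comm left_diff_distrib mult.assoc)
    then have "ad (\<lambda>x. b * x) (\<lambda>x. (t ^ j * c) * x) = (\<lambda>x. (t ^ Suc j * w) * x)"
      by (simp add: ad_def)
    then show ?thesis using Suc.IH[of "Suc j" w] Suc.prems by simp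
  qed
  then show ?case by auto
qed

lemma D_B_iff: "d \<in> D_B iB t \<longleftrightarrow> d \<in> EB \<and> (\<exists>m. ad_kills LB m d)"
  unfolding D_B_def by (subst diffops_UNIV_eq) (simp_all add: additive_left_mult)

lemma left_mult_in_D_B: "(\<lambda>x. b * x) \<in> D_B iB t"
proof -
  have "ad_kills LB (Suc n) (\<lambda>x. (t ^ 0 * b) * x)"
    by (rule ad_kills_left_mult_t_power) simp
  then have "ad_kills LB (Suc n) (\<lambda>x. b * x)" by simp
  with EB_left_mult show ?thesis unfolding D_B_iff by blast
qed

lemma D_B_diff:
  assumes "e \<in> D_B iB t" "e' \<in> D_B iB t"
  shows "(\<lambda>x. e x - e' x) \<in> D_B iB t"
proof -
  obtain m m' where m: "ad_kills LB m e" and m': "ad_kills LB m' e'"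
    using assms by (auto simp: D_B_iff)
  have "ad_kills LB (max m m') (\<lambda>x. e x - e' x)"
    by (rule ad_kills_diff[OF LB_additive ad_kills_mono[OF LB_additive m max.cobounded1]
          ad_kills_mono[OF LB_additive m' max.cobounded2]])
  with assms show ?thesis by (auto simp: D_B_iff EB_diff)
qed

lemma EA_iff: "d \<in> EA \<longleftrightarrow> additive d \<and> (\<forall>c x. d (iA c * x) = iA c * d x)"
  by (auto simp: klin_end_def additive_def)

lemma EA_left_mult: "(\<lambda>x. a * x) \<in> EA"
  by (simp add: EA_iff additive_left_mult mult.left_commute)

lemma LA_additive: "\<forall>z\<in>LA. additive z"
  by (simp add: additive_left_mult)

lemma D_A_iff: "d \<in> D_A iA \<longleftrightarrow> d \<in> EA \<and> (\<exists>m. ad_kills LA m d)"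
  unfolding D_A_def by (subst diffops_UNIV_eq) (simp_all add: additive_left_mult)

lemma D_A_additive: "d \<in> D_A iA \<Longrightarrow> additive d"
  by (simp add: D_A_iff EA_iff)

lemma D_A_add:
  assumes "d \<in> D_A iA" "e \<in> D_A iA"
  shows "(\<lambda>x. d x + e x) \<in> D_A iA"
proof -
  obtain m m' where m: "ad_kills LA m d" and m': "ad_kills LA m' e"
    using assms by (auto simp: D_A_iff)
  have "ad_kills LA (max m m') (\<lambda>x. d x + e x)"
    by (rule ad_kills_add[OF LA_additive ad_kills_mono[OF LA_additive m max.cobounded1]
          ad_kills_mono[OF LA_additive m' max.cobounded2]])
  with assms show ?thesis by (auto simp: D_A_iff EA_iff additive_add distrib_left)
qed

lemma D_A_diff:
  assumes "d \<in> D_A iA" "e \<in> D_A iA"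
  shows "(\<lambda>x. d x - e x) \<in> D_A iA"
proof -
  obtain m m' where m: "ad_kills LA m d" and m': "ad_kills LA m' e"
    using assms by (auto simp: D_A_iff)
  have "ad_kills LA (max m m') (\<lambda>x. d x - e x)"
    by (rule ad_kills_diff[OF LA_additive ad_kills_mono[OF LA_additive m max.cobounded1]
          ad_kills_mono[OF LA_additive m' max.cobounded2]])
  with assms show ?thesis by (auto simp: D_A_iff EA_iff additive_diff right_diff_distrib)
qed

lemma D_A_comp:
  assumes "d \<in> D_A iA" "e \<in> D_A iA"
  shows "(\<lambda>x. d (e x)) \<in> D_A iA"
proof -
  obtain m m' where "ad_kills LA (Suc m) d" "ad_kills LA (Suc m') e"
    using assms ad_kills_mono[OF LA_additive] unfolding D_A_iff by (metis le_add2 plus_1_eq_Suc)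
  then have "ad_kills LA (Suc (m + m')) (\<lambda>x. d (e x))"
    by (rule ad_kills_comp[OF LA_additive D_A_additive[OF assms(1)] D_A_additive[OF assms(2)]])
  moreover have "(\<lambda>x. d (e x)) \<in> EA" using assms by (simp add: D_A_iff EA_iff additive_comp)
  ultimately show ?thesis unfolding D_A_iff by blast
qed

lemma D_A_left_mult: "(\<lambda>x. a * x) \<in> D_A iA"
proof -
  have "ad_kills LA (Suc 0) (\<lambda>x. a * x)"
    by (simp add: ad_def mult.left_commute)
  with EA_left_mult show ?thesis unfolding D_A_iff by blast
qed

lemma D_A_zero: "(\<lambda>x. 0) \<in> D_A iA"
  using D_A_left_mult[of 0] by simp


lemma D_A_sum: "\<forall>i\<in>I. F i \<in> D_A iA \<Longrightarrow> (\<lambda>x. \<Sum>i\<in>I. F i x) \<in> D_A iA"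
  by (induction I rule: infinite_finite_induct) (simp_all add: D_A_zero D_A_add)

lemma s_comp: "d \<in> D_A iA \<Longrightarrow> e \<in> D_A iA \<Longrightarrow> s (\<lambda>x. d (e x)) = (\<lambda>x. s d (s e x))"
  using s_mult by (simp add: comp_def)

lemma s_zero: "s (\<lambda>x. 0) = (\<lambda>x. 0)"
proof -
  have eq: "s (\<lambda>x. 0) = (\<lambda>x. s (\<lambda>x. 0) x + s (\<lambda>x. 0) x)"
    using s_add[rule_format, OF D_A_zero D_A_zero] by simp
  have "s (\<lambda>x. 0) x = 0" for x
    using fun_cong[OF eq, of x] by simp
  then show ?thesis by auto
qed

lemma s_diff:
  assumes "d \<in> D_A iA" "e \<in> D_A iA"
  shows "s (\<lambda>x. d x - e x) = (\<lambda>x. s d x - s e x)"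
proof -
  have "s d = s (\<lambda>x. (d x - e x) + e x)" by simp
  also have "\<dots> = (\<lambda>x. s (\<lambda>x. d x - e x) x + s e x)"
    by (rule s_add[rule_format, OF D_A_diff[OF assms] assms(2)])
  finally show ?thesis by (simp add: fun_eq_iff)
qed


lemma s_sum: "\<forall>i\<in>I. F i \<in> D_A iA \<Longrightarrow> s (\<lambda>x. \<Sum>i\<in>I. F i x) = (\<lambda>x. \<Sum>i\<in>I. s (F i) x)"
  by (induction I rule: infinite_finite_induct) (simp_all add: s_zero s_add D_A_sum)

lemma s_EB: "d \<in> D_A iA \<Longrightarrow> s d \<in> EB"
  using s_into by (simp add: D_B_iff)

lemma s_left_mult_iA: "s (\<lambda>x. iA c * x) = (\<lambda>x. iB c * x)"
  using s_scal D_A_left_mult[of 1] s_one by (simp add: id_def)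

lemma s_left_mult_mult: "s (\<lambda>x. (a * a') * x) = (\<lambda>x. s (\<lambda>x. a * x) (s (\<lambda>x. a' * x) x))"
  using s_comp[OF D_A_left_mult D_A_left_mult] by (simp add: mult.assoc)

lemma s_left_mult_add: "s (\<lambda>x. (a + a') * x) = (\<lambda>x. s (\<lambda>x. a * x) x + s (\<lambda>x. a' * x) x)"
  using s_add D_A_left_mult by (simp add: distrib_right)

lemma D_A_ad: "d \<in> D_A iA \<Longrightarrow> e \<in> D_A iA \<Longrightarrow> ad d e \<in> D_A iA"
  unfolding ad_def by (rule D_A_diff[OF D_A_comp[of d e] D_A_comp[of e d]])

lemma s_ad: "d \<in> D_A iA \<Longrightarrow> e \<in> D_A iA \<Longrightarrow> s (ad d e) = ad (s d) (s e)"
  unfolding ad_def by (simp add: s_diff s_comp D_A_comp)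

lemma act_tens_eq_t_series: "act_tens t n s f = t_series t n (\<lambda>j. s (\<lambda>x. f j * x))"
  by (simp add: act_tens_def t_series_def)

lemma EB_t_series:
  assumes "\<forall>k. S k \<in> EB"
  shows "t_series t n S \<in> EB"
proof -
  have "(\<lambda>x. t ^ k * S k x) \<in> EB" for k
    using EB_comp[OF EB_left_mult[of "t ^ k"], of "S k"] assms by simp
  then show ?thesis unfolding t_series_def by (intro EB_sum) simp
qed

lemma act_ops_EB: "act_ops \<subseteq> EB"
  by (auto simp: act_tens_eq_t_series intro!: EB_t_series s_EB D_A_left_mult)

lemma act_ops_t_linear: "\<forall>z\<in>act_ops. t_linear t z"
  using act_ops_EB by (auto simp: EB_iff)

lemma act_ops_additive: "\<forall>z\<in>act_ops. additive z"
  using act_ops_t_linear by (simp add: t_linear_def)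

lemma act_diffops_iff:
  "d \<in> diffops UNIV EB (act_tens t n s) (tens n) \<longleftrightarrow> d \<in> EB \<and> (\<exists>m. ad_kills act_ops m d)"
  using act_ops_additive by (subst diffops_UNIV_eq) auto

lemma s_left_mult_in_act_ops: "s (\<lambda>x. a * x) \<in> act_ops"
proof
  show "(\<lambda>j. if j = 0 then a else 0) \<in> tens n" by (simp add: tens_def)
  show "s (\<lambda>x. a * x) = act_tens t n s (\<lambda>j. if j = 0 then a else 0)"
  proof
    fix b
    have "t ^ j * s (\<lambda>x. (if j = 0 then a else 0) * x) b = (if j = 0 then s (\<lambda>x. a * x) b else 0)"
      for j
      using s_zero by (cases "j = 0") simp_all
    then show "s (\<lambda>x. a * x) b = act_tens t n s (\<lambda>j. if j = 0 then a else 0) b"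
      by (simp add: act_tens_def)
  qed
qed

lemma ad_kills_s:
  "d \<in> D_A iA \<Longrightarrow> ad_kills LA m d \<Longrightarrow> ad_kills act_ops m (s d)"
proof (induction m arbitrary: d)
  case 0
  then show ?case by (simp add: s_zero)
next
  case (Suc m)
  have "ad_kills act_ops m (ad z (s d))" if "z \<in> act_ops" for z
  proof -
    obtain f where z: "z = t_series t n (\<lambda>j. s (\<lambda>x. f j * x))"
      using \<open>z \<in> act_ops\<close> by (auto simp: act_tens_eq_t_series)
    have "\<forall>j. t_linear t (s (\<lambda>x. f j * x))" "t_linear t (s d)"
      using s_EB D_A_left_mult Suc.prems(1) by (auto simp: EB_iff)
    then have "ad z (s d) = (\<lambda>x. \<Sum>j\<le>n. t ^ j * s (ad (\<lambda>x. f j * x) d) x)"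
      using ad_t_series_power_mult[of t _ "s d" n 0] by (simp add: z s_ad D_A_left_mult Suc.prems(1))
    moreover have "ad_kills act_ops m (\<lambda>x. t ^ j * s (ad (\<lambda>x. f j * x) d) x)" for j
    proof (rule ad_kills_comp_left[OF additive_left_mult])
      show "\<forall>z\<in>act_ops. \<forall>x. z (t ^ j * x) = t ^ j * z x"
        using act_ops_t_linear t_linear_power by blast
      show "ad_kills act_ops m (s (ad (\<lambda>x. f j * x) d))"
        using Suc.IH[of "ad (\<lambda>x. f j * x) d"] Suc.prems D_A_ad[OF D_A_left_mult] by simp
    qed
    ultimately show ?thesis by (simp add: ad_kills_sum[OF act_ops_additive])
  qed
  then show ?case by simp
qed

lemma residue_phi0:
  assumes e: "e \<in> EB"
  shows "residue phi e (phi 0 x) = phi 0 (e x)"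
proof -
  define y where "y = (SOME b. phi 0 b = phi 0 x)"
  have "phi 0 (y - x) = 0"
    by (simp add: y_def phi0_some additive.diff[OF phi0_additive])
  then obtain w where w: "y - x = t * w" using phi0_eq_0_iff by blast
  have "additive e" "\<forall>x. e (t * x) = t * e x" using e by (auto simp: EB_iff t_linear_def)
  then have "e y - e x = t * e w"
    using additive.diff[of e y x] w by simp
  then have "phi 0 (e y) - phi 0 (e x) = 0"
    by (simp add: phi0_t_mult flip: additive.diff[OF phi0_additive])
  then show ?thesis by (simp add: residue_def y_def)
qed

lemma residue_EA:
  assumes e: "e \<in> EB"
  shows "residue phi e \<in> EA"
proof -
  have ae: "additive e" using e by (simp add: EB_iff t_linear_def)
  have "residue phi e (a + a') = residue phi e a + residue phi e a'" for a a'
  proof -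
    obtain x y where xy: "phi 0 x = a" "phi 0 y = a'" using phi0_surj by metis
    have "residue phi e (a + a') = residue phi e (phi 0 (x + y))"
      using xy by (simp add: additive.add[OF phi0_additive])
    also have "\<dots> = phi 0 (e (x + y))" by (rule residue_phi0[OF e])
    also have "\<dots> = phi 0 (e x) + phi 0 (e y)"
      by (simp add: additive.add[OF ae] additive.add[OF phi0_additive])
    finally show ?thesis using residue_phi0[OF e, of x] residue_phi0[OF e, of y] xy by simp
  qed
  moreover have "residue phi e (iA c * a) = iA c * residue phi e a" for c a
  proof -
    obtain x where x: "phi 0 x = a" using phi0_surj by metis
    have "residue phi e (iA c * a) = residue phi e (phi 0 (iB c * x))"
      using x by (simp add: phi0_scal)
    also have "\<dots> = phi 0 (e (iB c * x))" by (rule residue_phi0[OF e])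
    also have "\<dots> = iA c * phi 0 (e x)" using e by (simp add: EB_iff phi0_scal)
    also have "\<dots> = iA c * residue phi e a" using residue_phi0[OF e, of x] x by simp
    finally show ?thesis .
  qed
  ultimately show ?thesis by (simp add: EA_iff additive_def)
qed

lemma ad_kills_residue: "e \<in> EB \<Longrightarrow> ad_kills LB m e \<Longrightarrow> ad_kills LA m (residue phi e)"
proof (induction m arbitrary: e)
  case 0
  then show ?case
    by (simp add: residue_def additive.zero[OF phi0_additive])
next
  case (Suc m)
  have "ad_kills LA m (ad (\<lambda>x. a * x) (residue phi e))" for a
  proof -
    obtain b where b: "phi 0 b = a" using phi0_surj by blast
    have be: "ad (\<lambda>x. b * x) e \<in> EB" using EB_ad[OF EB_left_mult Suc.prems(1)] .
    have "ad (\<lambda>x. a * x) (residue phi e) (phi 0 x) = residue phi (ad (\<lambda>x. b * x) e) (phi 0 x)"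
      for x
    proof -
      have "ad (\<lambda>x. a * x) (residue phi e) (phi 0 x)
          = phi 0 b * phi 0 (e x) - residue phi e (phi 0 (b * x))"
        using residue_phi0[OF Suc.prems(1), of x] by (simp add: ad_def phi0_mult b)
      also have "\<dots> = phi 0 (b * e x - e (b * x))"
        using residue_phi0[OF Suc.prems(1), of "b * x"]
        by (simp add: additive.diff[OF phi0_additive] phi0_mult)
      also have "\<dots> = residue phi (ad (\<lambda>x. b * x) e) (phi 0 x)"
        using residue_phi0[OF be, of x] by (simp add: ad_def)
      finally show ?thesis .
    qed
    then have "ad (\<lambda>x. a * x) (residue phi e) = residue phi (ad (\<lambda>x. b * x) e)"
      using phi0_surj by (metis ext)
    moreover have "ad_kills LA m (residue phi (ad (\<lambda>x. b * x) e))"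
      using Suc be by simp
    ultimately show ?thesis by simp
  qed
  then show ?case by auto
qed

lemma residue_D_A: "e \<in> D_B iB t \<Longrightarrow> residue phi e \<in> D_A iA"
  unfolding D_B_iff D_A_iff using residue_EA ad_kills_residue by blast

lemma D_B_zero: "(\<lambda>x. 0) \<in> D_B iB t"
  using left_mult_in_D_B[of 0] by simp

lemma D_B_uminus: "e \<in> D_B iB t \<Longrightarrow> (\<lambda>x. - e x) \<in> D_B iB t"
  using D_B_diff[OF D_B_zero] by simp

lemma phi_zero: "m \<le> n \<Longrightarrow> phi m 0 = 0"
  using phi_degree(1)[of m] by (simp add: tpow_set_def) (metis add_0 add_cancel_right_right mult_zero_right)

lemma gamma_phi_degree_0:
  assumes e: "t_linear t e" and res: "\<forall>x. phi 0 (e x) = 0"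
  shows "gamma_phi t phi n 0 e p m = 0"
proof (cases "m \<le> n")
  case True
  define b where "b = (SOME b. b \<in> tpow_set t m \<and> phi m b = p m)"
  have "\<exists>b. b \<in> tpow_set t m \<and> phi m b = p m"
    using phi_degree(3)[OF True] by (metis UNIV_I image_iff)
  then have "b \<in> tpow_set t m" unfolding b_def by (rule someI2_ex) blast
  then obtain c where "b = t ^ m * c" by (auto simp: tpow_set_def)
  moreover obtain w where "e c = t * w" using res phi0_eq_0_iff by blast
  ultimately have "e b = t ^ Suc m * w"
    using t_linear_power[OF e, of m c] by (metis mult.assoc power_Suc2)
  then have "phi m (e b) = 0"
    using phi_degree(4)[OF True] by (auto simp: tpow_set_def)
  then show ?thesis by (simp add: gamma_phi_def b_def)
qed (simp add: gamma_phi_def)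

text \<open>Only the injectivity of \<open>gr D(B) \<rightarrow> D(gr B)\<close> in degree 0 is used.\<close>

lemma D_B_divisible_by_t:
  assumes e: "e \<in> D_B iB t" and res: "\<forall>x. phi 0 (e x) = 0"
  shows "\<exists>e'\<in>D_B iB t. e = (\<lambda>x. t * e' x)"
proof -
  define ds where "ds = (\<lambda>i::nat. if i = 0 then e else (\<lambda>x. 0))"
  have "\<forall>i\<le>n. ds i \<in> tD iB t i"
    using e D_B_zero by (auto simp: ds_def tD_def intro!: exI[of _ "\<lambda>x. 0"])
  moreover have "(\<Sum>i\<le>n. gamma_phi t phi n i (ds i) p m) = 0" for p m
  proof -
    have "gamma_phi t phi n i (ds i) p m = 0" for i
      using gamma_phi_degree_0[of e] e res
      by (cases "i = 0") (auto simp: ds_def gamma_phi_def phi_zero D_B_iff EB_iff)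
    then show ?thesis by simp
  qed
  ultimately have "ds 0 \<in> tD iB t (Suc 0)"
    using deform by (auto simp: induces_deformation_def)
  then show ?thesis by (auto simp: ds_def tD_def)
qed

lemma residue_left_mult: "residue phi (\<lambda>x. b * x) = (\<lambda>x. phi 0 b * x)"
  by (simp add: residue_def phi0_mult phi0_some)

lemma D_B_eq_s_residue_plus_t:
  assumes e: "e \<in> D_B iB t"
  shows "\<exists>e'\<in>D_B iB t. e = (\<lambda>x. s (residue phi e) x + t * e' x)"
proof -
  have r: "residue phi e \<in> D_A iA" using residue_D_A[OF e] .
  have "phi 0 (e x - s (residue phi e) x) = 0" for x
    using residue_phi0[of e x] residue_phi0[of "s (residue phi e)" x] e s_EB[OF r] s_section r
    by (simp add: additive.diff[OF phi0_additive] D_B_iff)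
  then obtain e' where "e' \<in> D_B iB t" "(\<lambda>x. e x - s (residue phi e) x) = (\<lambda>x. t * e' x)"
    using D_B_divisible_by_t[OF D_B_diff[OF e s_into[rule_format, OF r]]] by blast
  then show ?thesis by (metis diff_eq_eq add.commute)
qed

lemma D_B_eq_partial_t_series:
  "e \<in> D_B iB t \<Longrightarrow>
    \<exists>D e'. (\<forall>k. D k \<in> D_A iA) \<and> e' \<in> D_B iB t \<and> e = (\<lambda>x. (\<Sum>k<m. t ^ k * s (D k) x) + t ^ m * e' x)"
proof (induction m)
  case 0
  then show ?case using D_A_zero by auto
next
  case (Suc m)
  then obtain D e' where D: "\<forall>k. D k \<in> D_A iA" "e' \<in> D_B iB t"
    "e = (\<lambda>x. (\<Sum>k<m. t ^ k * s (D k) x) + t ^ m * e' x)" by blast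
  obtain e'' where e'': "e'' \<in> D_B iB t" "e' = (\<lambda>x. s (residue phi e') x + t * e'' x)"
    using D_B_eq_s_residue_plus_t[OF D(2)] by blast
  have "e = (\<lambda>x. (\<Sum>k<Suc m. t ^ k * s ((D(m := residue phi e')) k) x) + t ^ Suc m * e'' x)"
  proof -
    have "t ^ m * (t * y) = t ^ Suc m * y" for y by (metis mult.assoc power_Suc2)
    then show ?thesis by (subst D(3), subst e''(2)) (simp add: distrib_left add.assoc)
  qed
  moreover have "\<forall>k. (D(m := residue phi e')) k \<in> D_A iA"
    using D(1) residue_D_A[OF D(2)] by simp
  ultimately show ?case using e''(1) by blast
qed

lemma D_B_eq_t_series:
  "e \<in> D_B iB t \<Longrightarrow> \<exists>D. (\<forall>k. D k \<in> D_A iA) \<and> e = t_series t n (\<lambda>k. s (D k))"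
  using D_B_eq_partial_t_series[of e "Suc n"] t_nilp
  by (auto simp: t_series_def lessThan_Suc_atMost)

lemma left_mult_eq_s_plus_t: "\<exists>e\<in>D_B iB t. (\<lambda>x. b * x) = (\<lambda>x. s (\<lambda>x. phi 0 b * x) x + t * e x)"
  using D_B_eq_s_residue_plus_t[OF left_mult_in_D_B] by (simp add: residue_left_mult)

lemma s_left_mult_decompose:
  "\<exists>b e. phi 0 b = a \<and> e \<in> D_B iB t \<and> s (\<lambda>x. a * x) = (\<lambda>x. b * x + t * e x)"
proof -
  obtain b where b: "phi 0 b = a" using phi0_surj by blast
  obtain e where "e \<in> D_B iB t" "(\<lambda>x. b * x) = (\<lambda>x. s (\<lambda>x. a * x) x + t * e x)"
    using left_mult_eq_s_plus_t[of b] b by blast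
  then have "s (\<lambda>x. a * x) = (\<lambda>x. b * x + t * - e x)" "(\<lambda>x. - e x) \<in> D_B iB t"
    by (auto simp: fun_eq_iff eq_diff_eq D_B_uminus dest: fun_cong)
  with b show ?thesis by blast
qed

lemma iB_one: "iB 1 = 1"
  using B_alg by (simp add: ring_hom_fun_def)

lemma graded_over_left_mult: "graded_over t n LB c (\<lambda>x. b * x)"
  unfolding graded_over_def graded_family_def
  by (rule exI[of _ "\<lambda>k. if k = 0 then (\<lambda>x. b * x) else (\<lambda>x. 0)"])
    (use EB_left_mult in \<open>auto simp: t_series_single EB_iff t_linear_zero ad_kills_zero[OF LB_additive]\<close>)

lemma graded_over_left_mult_t: "1 \<le> c \<Longrightarrow> graded_over t n LB c (\<lambda>x. t * x)"
proof -
  assume c: "1 \<le> c"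
  have "ad_kills LB 1 (\<lambda>x. x)" by (simp add: ad_def One_nat_def)
  then have id: "ad_kills LB c (\<lambda>x. x)" using ad_kills_mono[OF LB_additive _ c] by blast
  have zero: "(\<lambda>x. 0) \<in> LB" by (rule image_eqI[where x = 0]) simp_all
  have "t_linear t (\<lambda>x. x)" using EB_left_mult[of 1] by (simp add: EB_iff)
  with id zero show ?thesis
    unfolding graded_over_def graded_family_def
    by (intro exI[of _ "\<lambda>k. if k = 0 then (\<lambda>x. 0) else if k = 1 then (\<lambda>x. x) else (\<lambda>x. 0)"])
      (auto simp: t_series_two_terms[OF t_nilp] t_linear_zero ad_kills_zero[OF LB_additive])
qed

lemma eventually_graded_over_s_left_mult:
  "eventually (\<lambda>c. graded_over t n LB c (s (\<lambda>x. a * x))) sequentially"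
proof -
  obtain b e where e: "e \<in> D_B iB t" and s_eq: "s (\<lambda>x. a * x) = (\<lambda>x. b * x + t * e x)"
    using s_left_mult_decompose by blast
  obtain r where r: "ad_kills LB r e" using e by (auto simp: D_B_iff)
  have "graded_over t n LB c (s (\<lambda>x. a * x))" if "r \<le> c" for c
    unfolding s_eq
  proof (rule graded_over_two_terms[OF t_nilp LB_additive])
    show "(\<lambda>x. b * x) \<in> LB" by (rule rangeI)
    show "t_linear t (\<lambda>x. b * x)" "t_linear t e" using EB_left_mult e by (auto simp: EB_iff D_B_iff)
    show "ad_kills LB c e" by (rule ad_kills_mono[OF LB_additive r that])
  qed
  then show ?thesis by (auto simp: eventually_sequentially)
qed

definition generator_ops :: "'a set \<Rightarrow> ('b \<Rightarrow> 'b) set" where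
  "generator_ops S = (\<lambda>a. s (\<lambda>x. a * x)) ` (S \<union> range iA) \<union> {\<lambda>x. t * x}"

lemma s_left_mult_commute: "s (\<lambda>x. a * x) (s (\<lambda>x. a' * x) y) = s (\<lambda>x. a' * x) (s (\<lambda>x. a * x) y)"
proof -
  have "s (\<lambda>x. (a * a') * x) y = s (\<lambda>x. (a' * a) * x) y" by (simp add: mult.commute)
  then show ?thesis by (simp add: s_left_mult_mult)
qed

lemma generator_ops_EB: "generator_ops S \<subseteq> EB"
  using s_EB[OF D_A_left_mult] EB_left_mult by (auto simp: generator_ops_def)

lemma generator_ops_commute: "\<forall>g\<in>generator_ops S. \<forall>h\<in>generator_ops S. \<forall>x. g (h x) = h (g x)"
proof -
  have "s (\<lambda>x. a * x) (t * y) = t * s (\<lambda>x. a * x) y" for a y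
    using s_EB[OF D_A_left_mult] by (simp add: EB_iff t_linear_def)
  then show ?thesis by (auto simp: generator_ops_def s_left_mult_commute)
qed

lemma act_ops_subset_op_closure:
  assumes S: "alg_gen iA S = UNIV"
  shows "act_ops \<subseteq> op_closure (generator_ops S)"
proof -
  let ?C = "op_closure (generator_ops S)"
  have s_in: "s (\<lambda>x. a * x) \<in> ?C" for a
  proof -
    have "a \<in> alg_gen iA S" using S by simp
    then show ?thesis
    proof (induction a rule: alg_gen.induct)
      case (add a a')
      then show ?case by (simp add: s_left_mult_add op_closure.add)
    next
      case (mult a a')
      then show ?case by (simp add: s_left_mult_mult op_closure.comp)
    qed (auto simp: generator_ops_def intro: op_closure.gen)
  qed
  have t_pow: "(\<lambda>x. t ^ j * x) \<in> ?C" for j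
  proof (induction j)
    case 0
    then show ?case using s_in[of "iA 1"] by (simp add: s_left_mult_iA iB_one)
  next
    case (Suc j)
    have "(\<lambda>x. t * x) \<in> ?C" by (auto simp: generator_ops_def intro: op_closure.gen)
    from op_closure.comp[OF this Suc.IH] show ?case by (simp add: mult.assoc)
  qed
  show ?thesis
  proof
    fix z assume "z \<in> act_ops"
    then obtain f where z: "z = t_series t n (\<lambda>j. s (\<lambda>x. f j * x))"
      by (auto simp: act_tens_eq_t_series)
    have "(\<lambda>x. t ^ j * s (\<lambda>x. f j * x) x) \<in> ?C" for j
      using op_closure.comp[OF t_pow s_in] by simp
    then show "z \<in> ?C" unfolding z t_series_def by (simp add: op_closure_sum)
  qed
qed

lemma D_B_subset_act_diffops: "D_B iB t \<subseteq> diffops UNIV EB (act_tens t n s) (tens n)"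
proof
  fix d assume "d \<in> D_B iB t"
  then obtain m where d: "d \<in> EB" "ad_kills LB m d" by (auto simp: D_B_iff)
  obtain S where S: "finite S" "alg_gen iA S = UNIV" using A_fg by (auto simp: fin_gen_alg_def)
  have "eventually (\<lambda>c. 1 \<le> c \<and> (\<forall>a\<in>S. graded_over t n LB c (s (\<lambda>x. a * x)))) sequentially"
    by (intro eventually_conj eventually_ge_at_top eventually_ball_finite[OF S(1)] ballI
        eventually_graded_over_s_left_mult)
  then obtain c where c: "1 \<le> c" "\<forall>a\<in>S. graded_over t n LB c (s (\<lambda>x. a * x))"
    by (auto simp: eventually_sequentially)
  have "\<forall>g\<in>generator_ops S. graded_over t n LB c g"
    using c graded_over_left_mult graded_over_left_mult_t
    by (auto simp: generator_ops_def s_left_mult_iA)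
  then have "ad_kills (generator_ops S) (m + c * Suc n) d"
    using ad_kills_transfer[OF t_nilp LB_t_linear _ _ d(2)] d(1) by (simp add: EB_iff)
  moreover have "\<forall>g\<in>generator_ops S. additive g" "additive d"
    using generator_ops_EB[of S] d(1) by (auto simp: EB_iff t_linear_def subset_iff)
  ultimately have "ad_kills (op_closure (generator_ops S)) (m + c * Suc n) d"
    using ad_kills_op_closure generator_ops_commute by blast
  then have "ad_kills act_ops (m + c * Suc n) d"
    by (rule ad_kills_subset[OF act_ops_subset_op_closure[OF S(2)]])
  with d(1) show "d \<in> diffops UNIV EB (act_tens t n s) (tens n)"
    unfolding act_diffops_iff by blast
qed

lemma s_id: "s (\<lambda>x. x) = (\<lambda>x. x)"
  using s_one by (simp add: id_def)

lemma D_A_id: "(\<lambda>x. x) \<in> D_A iA"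
  using D_A_left_mult[of 1] by simp

lemma LA_commute: "\<forall>y\<in>LA. \<forall>z\<in>LA. \<forall>x. y (z x) = z (y x)"
  by (auto simp: mult.left_commute)

lemma LA_add_closed: "\<forall>y\<in>LA. \<forall>z\<in>LA. (\<lambda>x. y x + z x) \<in> LA"
proof (intro ballI)
  fix y z assume "y \<in> LA" "z \<in> LA"
  then obtain a a' where "y = (\<lambda>x. a * x)" "z = (\<lambda>x. a' * x)" by auto
  then show "(\<lambda>x. y x + z x) \<in> LA" by (intro image_eqI[where x = "a + a'"]) (simp_all add: distrib_right)
qed

lemma LA_comp_closed: "\<forall>y\<in>LA. \<forall>z\<in>LA. (\<lambda>x. y (z x)) \<in> LA"
proof (intro ballI)
  fix y z assume "y \<in> LA" "z \<in> LA"
  then obtain a a' where "y = (\<lambda>x. a * x)" "z = (\<lambda>x. a' * x)" by auto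
  then show "(\<lambda>x. y (z x)) \<in> LA" by (intro image_eqI[where x = "a * a'"]) (simp_all add: mult.assoc)
qed

lemma zero_in_LA: "(\<lambda>x. 0) \<in> LA"
  by (rule image_eqI[where x = 0]) simp_all

definition graded_lift :: "nat \<Rightarrow> 'b \<Rightarrow> bool" where
  "graded_lift c b \<longleftrightarrow>
     (\<exists>D. (\<forall>k. D k \<in> D_A iA) \<and> (\<lambda>x. b * x) = t_series t n (\<lambda>k. s (D k)) \<and> graded_family LA n c D)"

lemma graded_lift_iB: "graded_lift c (iB k)"
proof -
  define D where "D = (\<lambda>l::nat. if l = 0 then (\<lambda>x. iA k * x) else (\<lambda>x. 0))"
  have "(\<lambda>l. s (D l)) = (\<lambda>l. if l = 0 then (\<lambda>x. iB k * x) else (\<lambda>x. 0))"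
    by (simp add: D_def fun_eq_iff s_left_mult_iA s_zero)
  then have "(\<lambda>x. iB k * x) = t_series t n (\<lambda>l. s (D l))" by (simp add: t_series_single)
  moreover have "\<forall>l. D l \<in> D_A iA" "graded_family LA n c D"
    by (auto simp: D_def D_A_left_mult D_A_zero graded_family_def ad_kills_zero[OF LA_additive])
  ultimately show ?thesis unfolding graded_lift_def by blast
qed

lemma graded_lift_t: "1 \<le> c \<Longrightarrow> graded_lift c t"
proof -
  assume c: "1 \<le> c"
  define D where "D = (\<lambda>l::nat. if l = 0 then (\<lambda>x. 0) else if l = 1 then (\<lambda>x. x) else (\<lambda>x::'a. 0))"
  have "(\<lambda>l. s (D l)) = (\<lambda>l. if l = 0 then (\<lambda>x. 0) else if l = 1 then (\<lambda>x. x) else (\<lambda>x. 0))"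
    by (simp add: D_def fun_eq_iff s_id s_zero)
  then have "(\<lambda>x. t * x) = t_series t n (\<lambda>l. s (D l))" by (simp add: t_series_two_terms[OF t_nilp])
  moreover have "\<forall>l. D l \<in> D_A iA" by (simp add: D_def D_A_id D_A_zero)
  moreover have "ad_kills LA 1 (\<lambda>x. x)" by (simp add: ad_def One_nat_def)
  then have "ad_kills LA c (\<lambda>x. x)" using ad_kills_mono[OF LA_additive _ c] by blast
  then have "graded_family LA n c D"
    by (auto simp: D_def graded_family_def zero_in_LA ad_kills_zero[OF LA_additive])
  ultimately show ?thesis unfolding graded_lift_def by blast
qed

lemma graded_lift_add:
  assumes "graded_lift c b" "graded_lift c b'"
  shows "graded_lift c (b + b')"
proof -
  obtain D D' where D: "\<forall>k. D k \<in> D_A iA" "(\<lambda>x. b * x) = t_series t n (\<lambda>k. s (D k))"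
      "graded_family LA n c D"
    and D': "\<forall>k. D' k \<in> D_A iA" "(\<lambda>x. b' * x) = t_series t n (\<lambda>k. s (D' k))"
      "graded_family LA n c D'"
    using assms unfolding graded_lift_def by blast
  have sD: "s (\<lambda>x. D k x + D' k x) = (\<lambda>x. s (D k) x + s (D' k) x)" for k
    using s_add D(1) D'(1) by blast
  have "(\<lambda>x. (b + b') * x) = (\<lambda>x. t_series t n (\<lambda>k. s (D k)) x + t_series t n (\<lambda>k. s (D' k)) x)"
    using D(2) D'(2) by (metis distrib_right)
  also have "\<dots> = t_series t n (\<lambda>k x. s (D k) x + s (D' k) x)" by (rule t_series_add)
  also have "\<dots> = t_series t n (\<lambda>k. s (\<lambda>x. D k x + D' k x))" by (simp only: sD)
  finally have eq: "(\<lambda>x. (b + b') * x) = t_series t n (\<lambda>k. s (\<lambda>x. D k x + D' k x))" .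
  have "\<forall>k. (\<lambda>x. D k x + D' k x) \<in> D_A iA" using D(1) D'(1) D_A_add by blast
  with eq graded_family_add[OF LA_additive LA_add_closed D(3) D'(3)] show ?thesis
    unfolding graded_lift_def by (intro exI[of _ "\<lambda>k x. D k x + D' k x"]) simp
qed

lemma graded_lift_mult:
  assumes c: "1 \<le> c" and "graded_lift c b" "graded_lift c b'"
  shows "graded_lift c (b * b')"
proof -
  obtain D D' where D: "\<forall>k. D k \<in> D_A iA" "(\<lambda>x. b * x) = t_series t n (\<lambda>k. s (D k))"
      "graded_family LA n c D"
    and D': "\<forall>k. D' k \<in> D_A iA" "(\<lambda>x. b' * x) = t_series t n (\<lambda>k. s (D' k))"
      "graded_family LA n c D'"
    using assms(2,3) unfolding graded_lift_def by blast
  have comp: "\<forall>K. \<forall>k\<in>{..K}. (\<lambda>x. D k (D' (K - k) x)) \<in> D_A iA"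
    using D(1) D'(1) D_A_comp by blast
  have "t_linear t (s (D k))" for k using D(1) s_EB by (simp add: EB_iff)
  then have "(\<lambda>x. t_series t n (\<lambda>k. s (D k)) (t_series t n (\<lambda>k. s (D' k)) x))
      = t_series t n (op_cauchy (\<lambda>k. s (D k)) (\<lambda>k. s (D' k)))"
    by (simp add: t_series_comp[OF t_nilp])
  then have "(\<lambda>x. (b * b') * x) = t_series t n (op_cauchy (\<lambda>k. s (D k)) (\<lambda>k. s (D' k)))"
    by (subst (asm) D(2)[symmetric], subst (asm) D'(2)[symmetric]) (simp add: mult.assoc)
  also have "op_cauchy (\<lambda>k. s (D k)) (\<lambda>k. s (D' k)) = (\<lambda>K. s (op_cauchy D D' K))"
    using comp D(1) D'(1) by (simp add: fun_eq_iff op_cauchy_def s_sum s_comp)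
  finally have "(\<lambda>x. (b * b') * x) = t_series t n (\<lambda>K. s (op_cauchy D D' K))" .
  moreover have "\<forall>K. op_cauchy D D' K \<in> D_A iA"
    using comp by (simp add: op_cauchy_def D_A_sum)
  moreover have "graded_family LA n c (op_cauchy D D')"
    using D(1) D'(1) D_A_additive
    by (intro graded_family_cauchy[OF LA_additive LA_commute LA_comp_closed c _ D(3) _ D'(3)]) auto
  ultimately show ?thesis unfolding graded_lift_def by blast
qed

lemma left_mult_eq_t_series:
  "\<exists>D. (\<forall>k. D k \<in> D_A iA) \<and> D 0 = (\<lambda>x. phi 0 b * x) \<and> (\<lambda>x. b * x) = t_series t n (\<lambda>k. s (D k))"
proof -
  obtain e where e: "e \<in> D_B iB t" "(\<lambda>x. b * x) = (\<lambda>x. s (\<lambda>x. phi 0 b * x) x + t * e x)"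
    using left_mult_eq_s_plus_t by blast
  obtain E where E: "\<forall>k. E k \<in> D_A iA" "e = t_series t n (\<lambda>k. s (E k))"
    using D_B_eq_t_series[OF e(1)] by blast
  define D where "D = (\<lambda>k. if k = 0 then (\<lambda>x. phi 0 b * x) else E (k - 1))"
  have "t_series t n (\<lambda>k. s (D k))
      = (\<lambda>x. t_series t n (\<lambda>k. if k = 0 then s (\<lambda>x. phi 0 b * x) else (\<lambda>x. 0)) x
           + t_series t n (\<lambda>k. if k = 0 then (\<lambda>x. 0) else s (E (k - 1))) x)"
    unfolding t_series_add by (rule arg_cong[where f = "t_series t n"]) (auto simp: D_def fun_eq_iff)
  also have "\<dots> = (\<lambda>x. b * x)"
    using t_series_shift[OF t_nilp, of "\<lambda>k. s (E k)", symmetric]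
    by (simp add: t_series_single e(2) E(2))
  finally show ?thesis
    using E(1) D_A_left_mult by (intro exI[of _ D]) (simp add: D_def)
qed

lemma eventually_graded_lift:
  "eventually (\<lambda>c. \<exists>b. phi 0 b = a \<and> graded_lift c b) sequentially"
proof -
  obtain b where b: "phi 0 b = a" using phi0_surj by blast
  obtain D where D: "\<forall>k. D k \<in> D_A iA" "D 0 = (\<lambda>x. a * x)"
    "(\<lambda>x. b * x) = t_series t n (\<lambda>k. s (D k))"
    using left_mult_eq_t_series[of b] b by blast
  have "eventually (\<lambda>r. \<forall>l\<in>{1..n}. ad_kills LA r (D l)) sequentially"
  proof (intro eventually_ball_finite ballI)
    fix l
    obtain m where "ad_kills LA m (D l)" using D(1) by (auto simp: D_A_iff)
    then show "eventually (\<lambda>r. ad_kills LA r (D l)) sequentially"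
      using ad_kills_mono[OF LA_additive] by (auto simp: eventually_sequentially)
  qed simp
  then obtain r where r: "\<forall>l\<in>{1..n}. ad_kills LA r (D l)"
    by (auto simp: eventually_sequentially)
  have "graded_family LA n c D" if "r \<le> c" for c
  proof -
    have "ad_kills LA (c * l) (D l)" if "l \<in> {1..n}" for l
    proof (rule ad_kills_mono[OF LA_additive])
      show "ad_kills LA r (D l)" using r that by blast
      show "r \<le> c * l" using \<open>r \<le> c\<close> that by (simp add: le_trans[OF _ mult_le_mono2[of 1]])
    qed
    with D(2) show ?thesis by (simp add: graded_family_def)
  qed
  with D(1,3) b show ?thesis
    unfolding eventually_sequentially graded_lift_def by blast
qed

lemma graded_lift_of_lifts:
  assumes c: "1 \<le> c" and lift: "\<And>a. \<exists>b. phi 0 b = a \<and> graded_lift c b"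
  shows "graded_lift c b"
proof -
  have t_pow: "graded_lift c (t ^ m)" for m
  proof (induction m)
    case 0
    then show ?case using graded_lift_iB[of c 1] by (simp add: iB_one)
  next
    case (Suc m)
    then show ?case using graded_lift_mult[OF c graded_lift_t[OF c]] by simp
  qed
  have "\<exists>g w. graded_lift c g \<and> b - g = t ^ m * w" for m
  proof (induction m)
    case 0
    then show ?case using graded_lift_iB by auto
  next
    case (Suc m)
    then obtain g w where gw: "graded_lift c g" "b - g = t ^ m * w" by blast
    obtain g' where g': "phi 0 g' = phi 0 w" "graded_lift c g'" using lift by blast
    then have "phi 0 (w - g') = 0" by (simp add: additive.diff[OF phi0_additive])
    then obtain v where v: "w - g' = t * v" using phi0_eq_0_iff by blast
    have "graded_lift c (g + t ^ m * g')"
      using graded_lift_add[OF gw(1) graded_lift_mult[OF c t_pow g'(2)]] .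
    moreover have "b - (g + t ^ m * g') = t ^ Suc m * v"
    proof -
      have "b - (g + t ^ m * g') = t ^ m * (w - g')" using gw(2) by (simp add: algebra_simps)
      then show ?thesis using v by (metis mult.assoc power_Suc2)
    qed
    ultimately show ?case by blast
  qed
  then obtain g w where "graded_lift c g" "b - g = t ^ Suc n * w" by blast
  then show ?thesis using t_nilp by simp
qed

lemma ex_graded_lift: "\<exists>c. \<forall>b. graded_lift c b"
proof -
  obtain S where S: "finite S" "alg_gen iA S = UNIV" using A_fg by (auto simp: fin_gen_alg_def)
  have "eventually (\<lambda>c. 1 \<le> c \<and> (\<forall>a\<in>S. \<exists>b. phi 0 b = a \<and> graded_lift c b)) sequentially"
    by (intro eventually_conj eventually_ge_at_top eventually_ball_finite[OF S(1)] ballI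
        eventually_graded_lift)
  then obtain c where c: "1 \<le> c" "\<forall>a\<in>S. \<exists>b. phi 0 b = a \<and> graded_lift c b"
    by (auto simp: eventually_sequentially)
  have "\<exists>b. phi 0 b = a \<and> graded_lift c b" for a
  proof -
    have "a \<in> alg_gen iA S" using S(2) by simp
    then show ?thesis
    proof (induction a rule: alg_gen.induct)
      case (gen a)
      then show ?case using c(2) by blast
    next
      case (scal k)
      then show ?case using graded_lift_iB phi0_iB by blast
    next
      case (add a a')
      then show ?case using graded_lift_add additive.add[OF phi0_additive] by metis
    next
      case (mult a a')
      then show ?case using graded_lift_mult[OF c(1)] phi0_mult by metis
    qed
  qed
  then show ?thesis using graded_lift_of_lifts[OF c(1)] by blast
qed

lemma graded_over_act_ops:
  assumes "graded_lift c b"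
  shows "graded_over t n act_ops c (\<lambda>x. b * x)"
proof -
  obtain D where D: "\<forall>k. D k \<in> D_A iA" "(\<lambda>x. b * x) = t_series t n (\<lambda>k. s (D k))"
      "graded_family LA n c D"
    using assms unfolding graded_lift_def by blast
  have "graded_family act_ops n c (\<lambda>k. s (D k))"
    using D(1,3) s_left_mult_in_act_ops ad_kills_s by (auto simp: graded_family_def)
  moreover have "\<forall>l. t_linear t (s (D l))" using D(1) s_EB by (auto simp: EB_iff)
  ultimately show ?thesis using D(2) unfolding graded_over_def by blast
qed

lemma act_diffops_subset_D_B: "diffops UNIV EB (act_tens t n s) (tens n) \<subseteq> D_B iB t"
proof
  fix d assume "d \<in> diffops UNIV EB (act_tens t n s) (tens n)"
  then obtain m where d: "d \<in> EB" "ad_kills act_ops m d" by (auto simp: act_diffops_iff)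
  obtain c where "\<forall>b. graded_lift c b" using ex_graded_lift by blast
  then have "\<forall>g\<in>LB. graded_over t n act_ops c g" using graded_over_act_ops by auto
  then have "ad_kills LB (m + c * Suc n) d"
    using ad_kills_transfer[OF t_nilp act_ops_t_linear _ _ d(2)] d(1) by (simp add: EB_iff)
  with d(1) show "d \<in> D_B iB t" unfolding D_B_iff by blast
qed

theorem D_B_eq_act_diffops: "D_B iB t = diffops UNIV EB (act_tens t n s) (tens n)"
  using D_B_subset_act_diffops act_diffops_subset_D_B by (rule subset_antisym)

end

theorem lemma9p7:
  fixes iA :: "'k::field \<Rightarrow> 'a::comm_ring_1"
    and iB :: "'k \<Rightarrow> 'b::ring_1"
    and t :: 'b
    and n :: nat
    and phi :: "nat \<Rightarrow> 'b \<Rightarrow> 'a"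
    and s :: "('a \<Rightarrow> 'a) \<Rightarrow> ('b \<Rightarrow> 'b)"
  assumes A_alg: "ring_hom_fun iA"
    and A_fg: "fin_gen_alg iA"
    and B_alg: "ring_hom_fun iB"
    and iB_central: "\<forall>c b. iB c * b = b * iB c"
    and t_central: "\<forall>b. t * b = b * t"
    and t_nilp: "t ^ Suc n = 0"
    and grB: "gr_iso iA iB t n phi"
    and deform: "induces_deformation iA iB t n phi"
    and s_into: "\<forall>d\<in>D_A iA. s d \<in> D_B iB t"
    and s_add: "\<forall>d\<in>D_A iA. \<forall>e\<in>D_A iA. s (\<lambda>x. d x + e x) = (\<lambda>x. s d x + s e x)"
    and s_mult: "\<forall>d\<in>D_A iA. \<forall>e\<in>D_A iA. s (d \<circ> e) = s d \<circ> s e"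
    and s_one: "s id = id"
    and s_scal: "\<forall>c. \<forall>d\<in>D_A iA. s (\<lambda>x. iA c * d x) = (\<lambda>x. iB c * s d x)"
    and s_section: "\<forall>d\<in>D_A iA. residue phi (s d) = d"
  shows "D_B iB t = diffops UNIV (End_B iB t) (act_tens t n s) (tens n)"
proof -
  interpret deformation_with_section iA iB t n phi s
    unfolding deformation_with_section_def using assms by blast
  show ?thesis by (rule D_B_eq_act_diffops)
qed

end
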